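(* Let $X$ be a compact nonpositively curved cube complex and $(\tilde Y,\phi)$ a quasiline in $\tilde X$. Then there exist constants $N,M$, depending only on $(\tilde Y,\phi)$, such that for every integer $k>0$: (1) $\operatorname{diam}\big(H^+\cap\phi^{\pm k}(H^-)\big)\le kN$ for every essential hyperplane $H$ of $\tilde Y$ with halfspaces $H^+,H^-$; (2) if an essential hyperplane $H$ of $\tilde Y$ crosses a combinatorial geodesic $\gamma$ in $\tilde Y$ at an edge $e_0$, and $e_0$ has distance $\ge kM$ from both endpoints of $\gamma$, then $\phi^{k}(H)$ and $\phi^{-k}(H)$ cross $\gamma$. Moreover, any constants $\overline M\ge M$, $\overline N\ge N$ also satisfy (2) and (1) respectively.
   Context: $\tilde X$ is the universal cover of $X$. A quasiline in $\tilde X$ is a pair $(\tilde Y,\phi)$ with $\tilde Y\subset\tilde X$ a convex subcomplex and $\phi\in\pi_1X$ nontrivial such that $\langle\phi\rangle$ acts cocompactly on $\tilde Y$. Hyperplanes of $\tilde Y$ and their halfspaces $H^\pm$ (components of $\tilde Y$ minus the open carrier of $H$) are taken in the CAT(0) cube complex $\tilde Y$. A halfspace is deep if it contains points arbitrarily far from $H$; $H$ is essential if both halfspaces are deep. *)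

theory Defs
  imports Complex_Main
begin

text \<open>Graphs are given by an adjacency relation E on a vertex type; notions
relative to a vertex set S use the induced subgraph on S.\<close>

definition walk_in :: "'v set \<Rightarrow> ('v \<Rightarrow> 'v \<Rightarrow> bool) \<Rightarrow> 'v list \<Rightarrow> bool" where
  "walk_in S E xs \<longleftrightarrow> xs \<noteq> [] \<and> set xs \<subseteq> S \<and>
     (\<forall>i. Suc i < length xs \<longrightarrow> E (xs ! i) (xs ! Suc i))"

definition gdist :: "'v set \<Rightarrow> ('v \<Rightarrow> 'v \<Rightarrow> bool) \<Rightarrow> 'v \<Rightarrow> 'v \<Rightarrow> nat" where
  "gdist S E x y = (LEAST n. \<exists>xs. walk_in S E xs \<and> hd xs = x \<and> last xs = y \<and> length xs = Suc n)"

definition geodesic_in :: "'v set \<Rightarrow> ('v \<Rightarrow> 'v \<Rightarrow> bool) \<Rightarrow> 'v list \<Rightarrow> bool" where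
  "geodesic_in S E xs \<longleftrightarrow> walk_in S E xs \<and> length xs - 1 = gdist S E (hd xs) (last xs)"

definition interval :: "'v set \<Rightarrow> ('v \<Rightarrow> 'v \<Rightarrow> bool) \<Rightarrow> 'v \<Rightarrow> 'v \<Rightarrow> 'v set" where
  "interval S E u v = {x \<in> S. gdist S E u x + gdist S E x v = gdist S E u v}"

definition median_graph :: "('v \<Rightarrow> 'v \<Rightarrow> bool) \<Rightarrow> bool" where
  "median_graph E \<longleftrightarrow>
     (\<forall>x y. E x y \<longrightarrow> E y x) \<and> (\<forall>x. \<not> E x x) \<and>
     (\<forall>x y. \<exists>xs. walk_in UNIV E xs \<and> hd xs = x \<and> last xs = y) \<and>
     (\<forall>u v w. \<exists>!m. m \<in> interval UNIV E u v \<inter> interval UNIV E v w \<inter> interval UNIV E u w)"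

definition locally_finite :: "('v \<Rightarrow> 'v \<Rightarrow> bool) \<Rightarrow> bool" where
  "locally_finite E \<longleftrightarrow> (\<forall>x. finite {y. E x y})"

definition is_cube :: "('v \<Rightarrow> 'v \<Rightarrow> bool) \<Rightarrow> 'v set \<Rightarrow> bool" where
  "is_cube E C \<longleftrightarrow> (\<exists>n (f :: bool list \<Rightarrow> 'v).
     bij_betw f {xs. length xs = n} C \<and>
     (\<forall>xs ys. length xs = n \<longrightarrow> length ys = n \<longrightarrow>
        (E (f xs) (f ys) \<longleftrightarrow> card {i. i < n \<and> xs ! i \<noteq> ys ! i} = 1)))"

definition graph_aut :: "('v \<Rightarrow> 'v \<Rightarrow> bool) \<Rightarrow> ('v \<Rightarrow> 'v) \<Rightarrow> bool" where
  "graph_aut E g \<longleftrightarrow> bij g \<and> (\<forall>x y. E x y \<longleftrightarrow> E (g x) (g y))"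

text \<open>G is a group of cubical automorphisms acting freely and cocompactly:
  the deck group \<pi>1 X of a compact nonpositively curved cube complex X = X~/G.\<close>
definition free_cocompact_group :: "('v \<Rightarrow> 'v \<Rightarrow> bool) \<Rightarrow> ('v \<Rightarrow> 'v) set \<Rightarrow> bool" where
  "free_cocompact_group E G \<longleftrightarrow>
     (\<forall>g\<in>G. graph_aut E g) \<and> id \<in> G \<and>
     (\<forall>g\<in>G. \<forall>h\<in>G. g \<circ> h \<in> G) \<and> (\<forall>g\<in>G. inv g \<in> G) \<and>
     (\<forall>g\<in>G. \<forall>C. is_cube E C \<and> g ` C = C \<longrightarrow> g = id) \<and>
     (\<exists>F. finite F \<and> (\<forall>x. \<exists>g\<in>G. g x \<in> F))"

definition fpow :: "('v \<Rightarrow> 'v) \<Rightarrow> int \<Rightarrow> 'v \<Rightarrow> 'v" where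
  "fpow f k = (if 0 \<le> k then f ^^ nat k else inv f ^^ nat (- k))"

definition convex_set :: "('v \<Rightarrow> 'v \<Rightarrow> bool) \<Rightarrow> 'v set \<Rightarrow> bool" where
  "convex_set E Y \<longleftrightarrow> (\<forall>a\<in>Y. \<forall>b\<in>Y. interval UNIV E a b \<subseteq> Y)"

definition quasiline :: "('v \<Rightarrow> 'v \<Rightarrow> bool) \<Rightarrow> ('v \<Rightarrow> 'v) set \<Rightarrow> 'v set \<Rightarrow> ('v \<Rightarrow> 'v) \<Rightarrow> bool" where
  "quasiline E G Y \<phi> \<longleftrightarrow> Y \<noteq> {} \<and> convex_set E Y \<and> \<phi> \<in> G \<and> \<phi> \<noteq> id \<and> \<phi> ` Y = Y \<and>
     (\<exists>F. finite F \<and> F \<subseteq> Y \<and> Y \<subseteq> (\<Union>k::int. fpow \<phi> k ` F))"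

text \<open>Hyperplanes of the cube complex spanned by S are the Djokovic-Winkler
  classes of edges; the hyperplane dual to the edge (a,b) is given by its dual edges.\<close>
definition dual_edges :: "'v set \<Rightarrow> ('v \<Rightarrow> 'v \<Rightarrow> bool) \<Rightarrow> 'v \<Rightarrow> 'v \<Rightarrow> ('v \<times> 'v) set" where
  "dual_edges S E a b = {(c, d). c \<in> S \<and> d \<in> S \<and> E c d \<and>
      gdist S E a c + gdist S E b d \<noteq> gdist S E a d + gdist S E b c}"

definition carrier :: "'v set \<Rightarrow> ('v \<Rightarrow> 'v \<Rightarrow> bool) \<Rightarrow> 'v \<Rightarrow> 'v \<Rightarrow> 'v set" where
  "carrier S E a b = {c. \<exists>d. (c, d) \<in> dual_edges S E a b}"

definition halfspace :: "'v set \<Rightarrow> ('v \<Rightarrow> 'v \<Rightarrow> bool) \<Rightarrow> 'v \<Rightarrow> 'v \<Rightarrow> 'v set" where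
  "halfspace S E a b = {x \<in> S. gdist S E x a < gdist S E x b}"

definition deep :: "'v set \<Rightarrow> ('v \<Rightarrow> 'v \<Rightarrow> bool) \<Rightarrow> 'v \<Rightarrow> 'v \<Rightarrow> bool" where
  "deep S E a b \<longleftrightarrow> (\<forall>R. \<exists>x \<in> halfspace S E a b. \<forall>c \<in> carrier S E a b. R \<le> gdist S E x c)"

definition essential :: "'v set \<Rightarrow> ('v \<Rightarrow> 'v \<Rightarrow> bool) \<Rightarrow> 'v \<Rightarrow> 'v \<Rightarrow> bool" where
  "essential S E a b \<longleftrightarrow> deep S E a b \<and> deep S E b a"

end

(* A quasiline Y is coarsely a line: the orbit j |-> phi^j p of a base point is a proper coarse
   parametrisation of Y by the integers, and sending a vertex to the parameter of a nearby orbit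
   point is a coarse inverse. For an essential hyperplane H both halfspaces are connected and deep,
   which forces the carrier of H to project to a bounded interval and the two halfspaces to project
   to opposite rays [-C, oo) and (-oo, C] about some centre; since finitely many hyperplanes
   represent all of them up to translation, C can be chosen uniformly. Translation by phi^s shifts
   projections by s up to a bounded error. Hence H+ and phi^(+-k)(H-) overlap in a set projecting
   to an interval of length 2C + k + O(1), which gives (1); and an endpoint of a geodesic at distance
   at least kM from the edge dual to H projects so far into its ray that it lies on the same side of
   phi^(+-k)(H) as of H, so the geodesic also crosses phi^(+-k)(H), which gives (2). *)
theory Submission
  imports Defs
begin

section \<open>Walks and combinatorial distance\<close>

lemma walk_in_singleton [simp]: "walk_in S E [x] \<longleftrightarrow> x \<in> S"
  by (auto simp: walk_in_def)

lemma walk_in_Cons_Cons: "walk_in S E (x # y # zs) \<longleftrightarrow> x \<in> S \<and> E x y \<and> walk_in S E (y # zs)"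
  by (auto simp: walk_in_def All_less_Suc2)

lemma walk_in_not_Nil: "walk_in S E xs \<Longrightarrow> xs \<noteq> []"
  by (simp add: walk_in_def)

lemma walk_in_subset: "walk_in S E xs \<Longrightarrow> set xs \<subseteq> S"
  by (simp add: walk_in_def)

lemma walk_in_nth_adj: "walk_in S E xs \<Longrightarrow> Suc i < length xs \<Longrightarrow> E (xs ! i) (xs ! Suc i)"
  by (simp add: walk_in_def)

lemma walk_in_append:
  "walk_in S E xs \<Longrightarrow> walk_in S E ys \<Longrightarrow> last xs = hd ys \<Longrightarrow> walk_in S E (xs @ tl ys)"
proof (induction xs rule: induct_list012)
  case (2 x)
  then show ?case by (cases ys) (auto simp: walk_in_def)
next
  case (3 x y zs)
  then show ?case by (simp add: walk_in_Cons_Cons)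
qed (simp add: walk_in_def)

lemma walk_in_rev:
  assumes adj_sym: "\<And>x y. E x y \<Longrightarrow> E y x" and w: "walk_in S E xs"
  shows "walk_in S E (rev xs)"
  unfolding walk_in_def
proof (intro conjI allI impI)
  fix i assume i: "Suc i < length (rev xs)"
  define n where "n = length xs"
  have "Suc (n - 2 - i) < n" and k: "Suc (n - 2 - i) = n - 1 - i" using i n_def by auto
  then have "E (xs ! (n - 2 - i)) (xs ! (n - 1 - i))" using w walk_in_nth_adj n_def by metis
  moreover have "rev xs ! i = xs ! (n - 1 - i)" "rev xs ! Suc i = xs ! (n - 2 - i)"
    using i n_def by (simp_all add: rev_nth)
  ultimately show "E (rev xs ! i) (rev xs ! Suc i)" using adj_sym by metis
qed (use w in \<open>auto simp: walk_in_def\<close>)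

lemma walk_in_take: "walk_in S E xs \<Longrightarrow> 0 < n \<Longrightarrow> walk_in S E (take n xs)"
  unfolding walk_in_def by (auto dest: in_set_takeD)

lemma walk_in_drop: "walk_in S E xs \<Longrightarrow> n < length xs \<Longrightarrow> walk_in S E (drop n xs)"
  unfolding walk_in_def by (auto dest: in_set_dropD)

lemma walk_in_map:
  "(\<And>x y. E x y \<Longrightarrow> E (g x) (g y)) \<Longrightarrow> g ` S \<subseteq> S \<Longrightarrow> walk_in S E xs \<Longrightarrow> walk_in S E (map g xs)"
  unfolding walk_in_def by (auto simp: image_subset_iff)

lemma walk_in_mono: "S \<subseteq> S' \<Longrightarrow> walk_in S E xs \<Longrightarrow> walk_in S' E xs"
  unfolding walk_in_def by auto

lemma gdist_le_length:
  assumes "walk_in S E xs" "hd xs = x" "last xs = y"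
  shows "gdist S E x y \<le> length xs - 1"
proof -
  have "length xs = Suc (length xs - 1)" using walk_in_not_Nil[OF assms(1)] by (cases xs) auto
  then show ?thesis unfolding gdist_def using assms by (intro Least_le) blast
qed

lemma gdist_self: "x \<in> S \<Longrightarrow> gdist S E x x = 0"
  using gdist_le_length[of S E "[x]" x x] by simp

lemma geodesic_in_adj:
  "geodesic_in S E \<gamma> \<Longrightarrow> Suc i < length \<gamma> \<Longrightarrow> \<gamma> ! i \<in> S \<and> \<gamma> ! Suc i \<in> S \<and> E (\<gamma> ! i) (\<gamma> ! Suc i)"
  unfolding geodesic_in_def walk_in_def by auto

lemma list_transition:
  "xs \<noteq> [] \<Longrightarrow> hd xs \<in> P \<Longrightarrow> last xs \<notin> P \<Longrightarrow> \<exists>j. Suc j < length xs \<and> xs ! j \<in> P \<and> xs ! Suc j \<notin> P"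
proof (induction xs rule: induct_list012)
  case (3 x y zs)
  show ?case
  proof (cases "y \<in> P")
    case True
    then obtain j where "Suc j < length (y # zs)" "(y # zs) ! j \<in> P" "(y # zs) ! Suc j \<notin> P"
      using "3.IH"(2) "3.prems" by auto
    then show ?thesis by (intro exI[of _ "Suc j"]) simp
  next
    case False
    then show ?thesis using "3.prems" by (intro exI[of _ 0]) simp
  qed
qed auto

locale connected_graph =
  fixes S :: "'a set" and E :: "'a \<Rightarrow> 'a \<Rightarrow> bool"
  assumes adj_sym: "E x y \<Longrightarrow> E y x"
    and connected: "x \<in> S \<Longrightarrow> y \<in> S \<Longrightarrow> \<exists>xs. walk_in S E xs \<and> hd xs = x \<and> last xs = y"
begin

abbreviation \<delta> where "\<delta> \<equiv> gdist S E"

lemma shortest_walk: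
  assumes "x \<in> S" "y \<in> S"
  obtains xs where "walk_in S E xs" "hd xs = x" "last xs = y" "length xs = Suc (\<delta> x y)"
proof -
  obtain xs where xs: "walk_in S E xs" "hd xs = x" "last xs = y" using connected assms by blast
  have "length xs = Suc (length xs - 1)" using walk_in_not_Nil[OF xs(1)] by (cases xs) auto
  then have "\<exists>n xs. walk_in S E xs \<and> hd xs = x \<and> last xs = y \<and> length xs = Suc n" using xs by blast
  then have "\<exists>xs. walk_in S E xs \<and> hd xs = x \<and> last xs = y \<and> length xs = Suc (\<delta> x y)"
    unfolding gdist_def by (rule LeastI_ex)
  then show ?thesis using that by blast
qed

lemma gdist_eq_0D: "x \<in> S \<Longrightarrow> y \<in> S \<Longrightarrow> \<delta> x y = 0 \<Longrightarrow> x = y"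
  by (rule shortest_walk[of x y]) (auto simp: length_Suc_conv)

lemma gdist_adj_le_1: "x \<in> S \<Longrightarrow> y \<in> S \<Longrightarrow> E x y \<Longrightarrow> \<delta> x y \<le> 1"
  using gdist_le_length[of S E "[x, y]" x y] by (simp add: walk_in_Cons_Cons)

lemma gdist_triangle:
  assumes "x \<in> S" "y \<in> S" "z \<in> S"
  shows "\<delta> x z \<le> \<delta> x y + \<delta> y z"
proof -
  obtain xs where xs: "walk_in S E xs" "hd xs = x" "last xs = y" "length xs = Suc (\<delta> x y)"
    using shortest_walk[OF assms(1,2)] by blast
  obtain ys where ys: "walk_in S E ys" "hd ys = y" "last ys = z" "length ys = Suc (\<delta> y z)"
    using shortest_walk[OF assms(2,3)] by blast
  have "walk_in S E (xs @ tl ys)" using walk_in_append[OF xs(1) ys(1)] xs(3) ys(2) by simp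
  moreover have "hd (xs @ tl ys) = x" "last (xs @ tl ys) = z"
    using xs ys walk_in_not_Nil[OF xs(1)] walk_in_not_Nil[OF ys(1)]
    by (auto simp: last_append last_tl) (metis list.collapse list.sel(1) last_ConsL)
  ultimately show ?thesis using gdist_le_length[of S E "xs @ tl ys" x z] xs ys by simp
qed

lemma gdist_commute:
  assumes "x \<in> S" "y \<in> S" shows "\<delta> x y = \<delta> y x"
proof -
  have "\<delta> u v \<le> \<delta> v u" if "u \<in> S" "v \<in> S" for u v
  proof (rule shortest_walk[OF that(2,1)])
    fix xs assume xs: "walk_in S E xs" "hd xs = v" "last xs = u" "length xs = Suc (\<delta> v u)"
    then have "hd (rev xs) = u" "last (rev xs) = v"
      using walk_in_not_Nil[OF xs(1)] by (auto simp: hd_rev last_rev)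
    then show ?thesis using gdist_le_length[OF walk_in_rev[OF adj_sym xs(1)]] xs by simp
  qed
  then show ?thesis using assms by (simp add: order_antisym)
qed

lemma gdist_SucE:
  assumes "x \<in> S" "y \<in> S" "\<delta> x y = Suc n"
  obtains w where "w \<in> S" "\<delta> x w = n" "E w y"
proof -
  obtain xs where xs: "walk_in S E xs" "hd xs = x" "last xs = y" "length xs = Suc (Suc n)"
    using shortest_walk[OF assms(1,2)] unfolding assms(3) .
  let ?w = "xs ! n"
  have wS: "?w \<in> S" using walk_in_subset[OF xs(1)] xs(4) by auto
  have "xs \<noteq> []" using xs(4) by auto
  then have "xs ! Suc n = y" using xs(3,4) by (simp add: last_conv_nth)
  then have E: "E ?w y" using walk_in_nth_adj[OF xs(1), of n] xs(4) by simp
  have "hd (take (Suc n) xs) = x" using xs by (cases xs) auto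
  moreover have "last (take (Suc n) xs) = ?w" using xs(4) by (simp add: take_Suc_conv_app_nth)
  ultimately have "\<delta> x ?w \<le> length (take (Suc n) xs) - 1"
    by (rule gdist_le_length[OF walk_in_take[OF xs(1) zero_less_Suc]])
  then have "\<delta> x ?w \<le> n" using xs(4) by simp
  moreover have "\<delta> x y \<le> \<delta> x ?w + \<delta> ?w y" using gdist_triangle assms wS by blast
  moreover have "\<delta> ?w y \<le> 1" using gdist_adj_le_1 assms wS E by blast
  ultimately have "\<delta> x ?w = n" using assms(3) by linarith
  then show ?thesis using that wS E by blast
qed

lemma shortest_walk_nth_gdist:
  assumes xs: "walk_in S E xs" "length xs = Suc (\<delta> (hd xs) (last xs))" and i: "i < length xs"
  shows "\<delta> (hd xs) (xs ! i) = i" "\<delta> (xs ! i) (last xs) = length xs - 1 - i"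
proof -
  have ne: "xs \<noteq> []" using walk_in_not_Nil xs by blast
  have S: "hd xs \<in> S" "last xs \<in> S" "xs ! i \<in> S" using walk_in_subset[OF xs(1)] ne i by auto
  have "hd (take (Suc i) xs) = hd xs" using ne by (cases xs) auto
  moreover have "last (take (Suc i) xs) = xs ! i" using i by (simp add: take_Suc_conv_app_nth)
  ultimately have "\<delta> (hd xs) (xs ! i) \<le> length (take (Suc i) xs) - 1"
    by (rule gdist_le_length[OF walk_in_take[OF xs(1) zero_less_Suc]])
  then have "\<delta> (hd xs) (xs ! i) \<le> i" using i by simp
  moreover have "\<delta> (xs ! i) (last xs) \<le> length xs - 1 - i"
    using gdist_le_length[OF walk_in_drop[OF xs(1) i]] i by (simp add: hd_drop_conv_nth)
  moreover have "\<delta> (hd xs) (last xs) \<le> \<delta> (hd xs) (xs ! i) + \<delta> (xs ! i) (last xs)"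
    using gdist_triangle S by blast
  ultimately show "\<delta> (hd xs) (xs ! i) = i" "\<delta> (xs ! i) (last xs) = length xs - 1 - i"
    using xs(2) i by linarith+
qed

lemma finite_gdist_ball:
  assumes "\<And>x. finite {y. E x y}" and x: "x \<in> S"
  shows "finite {y \<in> S. \<delta> x y \<le> r}"
proof (induction r)
  case 0
  have "{y \<in> S. \<delta> x y \<le> 0} \<subseteq> {x}" using gdist_eq_0D x by auto
  then show ?case using finite_subset by blast
next
  case (Suc r)
  let ?B = "{y \<in> S. \<delta> x y \<le> r}"
  have "{y \<in> S. \<delta> x y \<le> Suc r} \<subseteq> ?B \<union> (\<Union>w\<in>?B. {y. E w y})"
  proof
    fix y assume y: "y \<in> {y \<in> S. \<delta> x y \<le> Suc r}"
    show "y \<in> ?B \<union> (\<Union>w\<in>?B. {y. E w y})"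
    proof (cases "\<delta> x y \<le> r")
      case False
      then have "\<delta> x y = Suc r" using y by simp
      then obtain w where "w \<in> S" "\<delta> x w = r" "E w y" using gdist_SucE[OF x] y by (metis mem_Collect_eq)
      then show ?thesis by blast
    qed (use y in simp)
  qed
  moreover have "finite (?B \<union> (\<Union>w\<in>?B. {y. E w y}))" using Suc.IH assms(1) by simp
  ultimately show ?case by (rule finite_subset)
qed

end

section \<open>Median graphs, automorphisms and hyperplanes\<close>

lemma median_graph_connected: "median_graph E \<Longrightarrow> connected_graph UNIV E"
  unfolding median_graph_def by unfold_locales blast+

lemma median_graph_irrefl: "median_graph E \<Longrightarrow> E a b \<Longrightarrow> a \<noteq> b"
  unfolding median_graph_def by blast

lemma convex_shortest_walk:
  assumes m: "median_graph E" and c: "convex_set E Y" and a: "a \<in> Y" and b: "b \<in> Y"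
  obtains xs where "walk_in Y E xs" "hd xs = a" "last xs = b" "length xs = Suc (gdist UNIV E a b)"
proof -
  interpret U: connected_graph UNIV E by (rule median_graph_connected[OF m])
  obtain xs where xs: "walk_in UNIV E xs" "hd xs = a" "last xs = b" "length xs = Suc (gdist UNIV E a b)"
    using U.shortest_walk by blast
  have "v \<in> Y" if "v \<in> set xs" for v
  proof -
    obtain i where i: "i < length xs" "v = xs ! i" using \<open>v \<in> set xs\<close> by (metis in_set_conv_nth)
    have "gdist UNIV E a v = i" "gdist UNIV E v b = length xs - 1 - i"
      using U.shortest_walk_nth_gdist[of xs i] xs i by auto
    then have "v \<in> interval UNIV E a b" unfolding interval_def using xs(4) i by auto
    then show "v \<in> Y" using c a b unfolding convex_set_def by blast
  qed
  then have "walk_in Y E xs" using xs(1) by (auto simp: walk_in_def)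
  then show ?thesis using that xs by blast
qed

lemma convex_connected_graph:
  assumes "median_graph E" "convex_set E Y" shows "connected_graph Y E"
proof
  show "E x y \<Longrightarrow> E y x" for x y using assms(1) unfolding median_graph_def by blast
  show "\<exists>xs. walk_in Y E xs \<and> hd xs = x \<and> last xs = y" if "x \<in> Y" "y \<in> Y" for x y
    using convex_shortest_walk[OF assms that] by metis
qed

lemma gdist_convex_eq:
  assumes m: "median_graph E" and c: "convex_set E Y" and a: "a \<in> Y" and b: "b \<in> Y"
  shows "gdist Y E a b = gdist UNIV E a b"
proof -
  interpret Y: connected_graph Y E by (rule convex_connected_graph[OF m c])
  obtain xs where "walk_in Y E xs" "hd xs = a" "last xs = b" "length xs = Suc (gdist UNIV E a b)"
    using convex_shortest_walk[OF m c a b] by blast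
  then have "gdist Y E a b \<le> gdist UNIV E a b" using gdist_le_length by fastforce
  moreover obtain ys where "walk_in Y E ys" "hd ys = a" "last ys = b" "length ys = Suc (gdist Y E a b)"
    using Y.shortest_walk[OF a b] by blast
  then have "gdist UNIV E a b \<le> gdist Y E a b" using gdist_le_length walk_in_mono[of Y UNIV] by fastforce
  ultimately show ?thesis by simp
qed

text \<open>The median of x, a, b for an edge ab is a or b, so x is strictly closer to one end of the edge.\<close>

lemma median_gdist_adj_cases:
  assumes m: "median_graph E" and c: "convex_set E Y" and a: "a \<in> Y" and b: "b \<in> Y"
    and x: "x \<in> Y" and ab: "E a b"
  shows "gdist Y E x b = gdist Y E x a + 1 \<or> gdist Y E x a = gdist Y E x b + 1"
proof -
  interpret U: connected_graph UNIV E by (rule median_graph_connected[OF m])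
  have "gdist UNIV E a b \<noteq> 0" using U.gdist_eq_0D median_graph_irrefl[OF m ab] by blast
  then have dab: "gdist UNIV E a b = 1" using U.gdist_adj_le_1 ab by fastforce
  obtain mm where mm: "mm \<in> interval UNIV E x a \<inter> interval UNIV E a b \<inter> interval UNIV E x b"
    using m unfolding median_graph_def by blast
  have "gdist UNIV E a mm + gdist UNIV E mm b = 1" using mm dab unfolding interval_def by auto
  then have "gdist UNIV E a mm = 0 \<or> gdist UNIV E mm b = 0" by arith
  then have "mm = a \<or> mm = b" using U.gdist_eq_0D by blast
  then have "gdist UNIV E x b = gdist UNIV E x a + 1 \<or> gdist UNIV E x a = gdist UNIV E x b + 1"
    using mm dab U.gdist_commute[of a b] unfolding interval_def by auto
  then show ?thesis using gdist_convex_eq[OF m c] a b x by simp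
qed

definition aut_on :: "('v \<Rightarrow> 'v \<Rightarrow> bool) \<Rightarrow> 'v set \<Rightarrow> ('v \<Rightarrow> 'v) \<Rightarrow> bool" where
  "aut_on E S g \<longleftrightarrow> graph_aut E g \<and> g ` S = S"

lemma aut_on_id: "aut_on E S id"
  by (simp add: aut_on_def graph_aut_def)

lemma aut_on_comp: "aut_on E S f \<Longrightarrow> aut_on E S g \<Longrightarrow> aut_on E S (f \<circ> g)"
  unfolding aut_on_def graph_aut_def image_comp[symmetric] by (simp add: bij_comp)

lemma aut_on_inv: assumes "aut_on E S g" shows "aut_on E S (inv g)"
proof -
  have bg: "bij g" and gE: "\<And>x y. E x y \<longleftrightarrow> E (g x) (g y)" and gS: "g ` S = S"
    using assms unfolding aut_on_def graph_aut_def by auto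
  have "E x y \<longleftrightarrow> E (inv g x) (inv g y)" for x y
    using gE[of "inv g x" "inv g y"] bij_is_surj[OF bg] by (simp add: surj_f_inv_f)
  moreover have "inv g ` S = S" using image_inv_f_f[OF bij_is_inj[OF bg], of S] gS by simp
  ultimately show ?thesis using bij_imp_bij_inv[OF bg] unfolding aut_on_def graph_aut_def by blast
qed

lemma aut_on_mem_iff: "aut_on E S g \<Longrightarrow> g x \<in> S \<longleftrightarrow> x \<in> S"
  unfolding aut_on_def graph_aut_def by (metis bij_is_inj inj_image_mem_iff)

lemma aut_on_adj_iff: "aut_on E S g \<Longrightarrow> E (g x) (g y) \<longleftrightarrow> E x y"
  unfolding aut_on_def graph_aut_def by blast

lemma aut_on_inv_apply: "aut_on E S g \<Longrightarrow> inv g (g x) = x"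
  unfolding aut_on_def graph_aut_def by (simp add: bij_is_inj inv_f_f)

lemma aut_on_apply_inv: "aut_on E S g \<Longrightarrow> g (inv g x) = x"
  unfolding aut_on_def graph_aut_def by (simp add: bij_is_surj surj_f_inv_f)

lemma fpow_0 [simp]: "fpow \<phi> 0 = id"
  by (simp add: fpow_def)

lemma fpow_add_1: assumes "bij \<phi>" shows "fpow \<phi> (k + 1) = \<phi> \<circ> fpow \<phi> k"
proof -
  have inv: "\<phi> \<circ> inv \<phi> = id" using assms by (metis bij_is_surj surj_iff)
  consider "0 \<le> k" | "k = -1" | "k < -1" by linarith
  then show ?thesis
  proof cases
    case 1
    then have "nat (k + 1) = Suc (nat k)" by simp
    then show ?thesis using 1 by (simp add: fpow_def)
  next
    case 3
    then have "nat (- k) = Suc (nat (- (k + 1)))" by simp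
    then have "\<phi> \<circ> fpow \<phi> k = (\<phi> \<circ> inv \<phi>) \<circ> fpow \<phi> (k + 1)" using 3 by (simp add: fpow_def comp_assoc)
    then show ?thesis using inv by simp
  qed (use inv in \<open>simp add: fpow_def\<close>)
qed

lemma fpow_diff_1: assumes "bij \<phi>" shows "fpow \<phi> (k - 1) = inv \<phi> \<circ> fpow \<phi> k"
proof -
  have "inv \<phi> \<circ> fpow \<phi> k = (inv \<phi> \<circ> \<phi>) \<circ> fpow \<phi> (k - 1)"
    using fpow_add_1[OF assms, of "k - 1"] by (simp add: comp_assoc)
  then show ?thesis using assms by (metis bij_is_inj inj_iff id_comp)
qed

lemma fpow_add: assumes "bij \<phi>" shows "fpow \<phi> (i + j) = fpow \<phi> i \<circ> fpow \<phi> j"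
proof (induction i rule: int_induct[where k = 0])
  case (step1 i)
  have "fpow \<phi> (i + 1 + j) = \<phi> \<circ> fpow \<phi> (i + j)" using fpow_add_1[OF assms, of "i + j"] by (simp add: ac_simps)
  then show ?case using step1 fpow_add_1[OF assms, of i] by (simp add: comp_assoc)
next
  case (step2 i)
  have "fpow \<phi> (i - 1 + j) = inv \<phi> \<circ> fpow \<phi> (i + j)" using fpow_diff_1[OF assms, of "i + j"] by (simp add: algebra_simps)
  then show ?case using step2 fpow_diff_1[OF assms, of i] by (simp add: comp_assoc)
qed simp

lemma fpow_apply_add: "bij \<phi> \<Longrightarrow> fpow \<phi> i (fpow \<phi> j x) = fpow \<phi> (i + j) x"
  by (simp add: fpow_add)

lemma aut_on_fpow: assumes "aut_on E S \<phi>" shows "aut_on E S (fpow \<phi> k)"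
proof -
  have b: "bij \<phi>" using assms unfolding aut_on_def graph_aut_def by blast
  show ?thesis
  proof (induction k rule: int_induct[where k = 0])
    case (step1 i) show ?case unfolding fpow_add_1[OF b] by (rule aut_on_comp[OF assms step1(2)])
  next
    case (step2 i) show ?case unfolding fpow_diff_1[OF b] by (rule aut_on_comp[OF aut_on_inv[OF assms] step2(2)])
  qed (simp only: fpow_0 aut_on_id)
qed

lemma dual_edges_commute: "dual_edges S E a b = dual_edges S E b a"
  unfolding dual_edges_def by auto

lemma carrier_commute: "carrier S E a b = carrier S E b a"
  unfolding carrier_def using dual_edges_commute by metis

lemma essential_commute: "essential S E a b \<Longrightarrow> essential S E b a"
  unfolding essential_def deep_def using carrier_commute by metis

lemma halfspace_subset: "halfspace S E a b \<subseteq> S"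
  unfolding halfspace_def by blast

lemma carrier_subset: "carrier S E a b \<subseteq> S"
  unfolding carrier_def dual_edges_def by blast

context connected_graph
begin

lemma gdist_aut_on_le:
  assumes g: "aut_on E S g" and x: "x \<in> S" and y: "y \<in> S"
  shows "\<delta> (g x) (g y) \<le> \<delta> x y"
proof (rule shortest_walk[OF x y])
  fix xs assume xs: "walk_in S E xs" "hd xs = x" "last xs = y" "length xs = Suc (\<delta> x y)"
  have "walk_in S E (map g xs)"
    using walk_in_map[OF _ _ xs(1)] aut_on_adj_iff[OF g] aut_on_mem_iff[OF g] by blast
  moreover have "hd (map g xs) = g x" "last (map g xs) = g y"
    using xs walk_in_not_Nil[OF xs(1)] by (auto simp: hd_map last_map)
  ultimately show ?thesis using gdist_le_length[of S E "map g xs" "g x" "g y"] xs(4) by simp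
qed

lemma gdist_aut_on:
  assumes g: "aut_on E S g" and x: "x \<in> S" and y: "y \<in> S"
  shows "\<delta> (g x) (g y) = \<delta> x y"
proof -
  have "g x \<in> S" "g y \<in> S" using aut_on_mem_iff[OF g] x y by simp_all
  then have "\<delta> (inv g (g x)) (inv g (g y)) \<le> \<delta> (g x) (g y)" by (rule gdist_aut_on_le[OF aut_on_inv[OF g]])
  then show ?thesis using gdist_aut_on_le[OF g x y] aut_on_inv_apply[OF g] by simp
qed

lemma halfspace_aut_on:
  assumes g: "aut_on E S g" and "a \<in> S" "b \<in> S" "x \<in> halfspace S E a b"
  shows "g x \<in> halfspace S E (g a) (g b)"
  using assms gdist_aut_on[OF g] aut_on_mem_iff[OF g] unfolding halfspace_def by auto

lemma carrier_aut_onE: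
  assumes g: "aut_on E S g" and a: "a \<in> S" and b: "b \<in> S" and c': "c' \<in> carrier S E (g a) (g b)"
  obtains c where "c \<in> carrier S E a b" "c' = g c"
proof -
  obtain d' where "(c', d') \<in> dual_edges S E (g a) (g b)" using c' unfolding carrier_def by blast
  then have S': "c' \<in> S" "d' \<in> S" and e: "E c' d'"
    and ne: "\<delta> (g a) c' + \<delta> (g b) d' \<noteq> \<delta> (g a) d' + \<delta> (g b) c'"
    unfolding dual_edges_def by auto
  define c d where "c = inv g c'" and "d = inv g d'"
  have gcd: "g c = c'" "g d = d'" unfolding c_def d_def using aut_on_apply_inv[OF g] by auto
  have S: "c \<in> S" "d \<in> S" using aut_on_mem_iff[OF g] S' gcd by auto
  have "E c d" using aut_on_adj_iff[OF g] gcd e by metis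
  moreover have "\<delta> a c + \<delta> b d \<noteq> \<delta> a d + \<delta> b c"
    using ne gdist_aut_on[OF g] a b S gcd by metis
  ultimately have "c \<in> carrier S E a b" using S unfolding carrier_def dual_edges_def by blast
  then show ?thesis using that gcd by blast
qed

lemma essential_aut_on:
  assumes g: "aut_on E S g" and a: "a \<in> S" and b: "b \<in> S" and ess: "essential S E a b"
  shows "essential S E (g a) (g b)"
proof -
  have "deep S E (g u) (g v)" if uv: "u \<in> S" "v \<in> S" and dp: "deep S E u v" for u v
    unfolding deep_def
  proof
    fix R
    obtain x where x: "x \<in> halfspace S E u v" "\<forall>c\<in>carrier S E u v. R \<le> \<delta> x c"
      using dp unfolding deep_def by blast
    have "\<forall>c'\<in>carrier S E (g u) (g v). R \<le> \<delta> (g x) c'"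
      using x carrier_aut_onE[OF g uv] gdist_aut_on[OF g] halfspace_subset carrier_subset
      by (metis subsetD)
    then show "\<exists>x\<in>halfspace S E (g u) (g v). \<forall>c\<in>carrier S E (g u) (g v). R \<le> \<delta> x c"
      using halfspace_aut_on[OF g uv x(1)] by blast
  qed
  then show ?thesis using ess a b unfolding essential_def by blast
qed

lemma adj_in_carrier:
  assumes "a \<in> S" "b \<in> S" "E a b" "a \<noteq> b"
  shows "a \<in> carrier S E a b"
proof -
  have "\<delta> a b \<noteq> 0" "\<delta> b a \<noteq> 0" using gdist_eq_0D assms by metis+
  then have "(a, b) \<in> dual_edges S E a b"
    unfolding dual_edges_def using assms gdist_self[of a] gdist_self[of b] by simp
  then show ?thesis unfolding carrier_def by blast
qed

lemma adj_in_own_halfspace: "a \<in> S \<Longrightarrow> b \<in> S \<Longrightarrow> a \<noteq> b \<Longrightarrow> a \<in> halfspace S E a b"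
  using gdist_self[of a S E] gdist_eq_0D[of a b] unfolding halfspace_def by fastforce

lemma adj_across_dual_edge:
  assumes "a \<in> S" "b \<in> S" "u \<in> halfspace S E a b" "v \<in> S" "v \<notin> halfspace S E a b" "E u v"
  shows "(u, v) \<in> dual_edges S E a b"
proof -
  have u: "u \<in> S" "\<delta> u a < \<delta> u b" using assms(3) unfolding halfspace_def by auto
  have v: "\<not> \<delta> v a < \<delta> v b" using assms(4,5) unfolding halfspace_def by auto
  have "\<delta> a u = \<delta> u a" "\<delta> b u = \<delta> u b" "\<delta> a v = \<delta> v a" "\<delta> b v = \<delta> v b"
    using gdist_commute assms u by auto
  then have "\<delta> a u + \<delta> b v \<noteq> \<delta> a v + \<delta> b u" using u v by linarith
  then show ?thesis using assms u unfolding dual_edges_def by blast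
qed

lemma walk_crosses_dual_edge:
  assumes w: "walk_in S E xs" and "a \<in> S" "b \<in> S"
    and "hd xs \<in> halfspace S E a b" and "last xs \<notin> halfspace S E a b"
  shows "\<exists>j. Suc j < length xs \<and> (xs ! j, xs ! Suc j) \<in> dual_edges S E a b"
proof -
  obtain j where j: "Suc j < length xs" "xs ! j \<in> halfspace S E a b" "xs ! Suc j \<notin> halfspace S E a b"
    using list_transition[OF walk_in_not_Nil[OF w]] assms by blast
  moreover have "xs ! Suc j \<in> S" using walk_in_subset[OF w] j(1) by auto
  ultimately have "(xs ! j, xs ! Suc j) \<in> dual_edges S E a b"
    using adj_across_dual_edge[OF assms(2,3)] walk_in_nth_adj[OF w] by blast
  then show ?thesis using j(1) by blast
qed

lemma geodesic_halfspaces: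
  assumes geo: "geodesic_in S E \<gamma>" and i: "Suc i < length \<gamma>"
  shows "hd \<gamma> \<in> halfspace S E (\<gamma> ! i) (\<gamma> ! Suc i)" "last \<gamma> \<in> halfspace S E (\<gamma> ! Suc i) (\<gamma> ! i)"
proof -
  have w: "walk_in S E \<gamma>" and ne: "\<gamma> \<noteq> []" using geo walk_in_not_Nil unfolding geodesic_in_def by auto
  have len: "length \<gamma> = Suc (\<delta> (hd \<gamma>) (last \<gamma>))" using geo ne unfolding geodesic_in_def by (cases \<gamma>) auto
  have S: "hd \<gamma> \<in> S" "last \<gamma> \<in> S" "\<gamma> ! i \<in> S" "\<gamma> ! Suc i \<in> S" using walk_in_subset[OF w] ne i by auto
  note d = shortest_walk_nth_gdist[OF w len, of i] shortest_walk_nth_gdist[OF w len, of "Suc i"]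
  show "hd \<gamma> \<in> halfspace S E (\<gamma> ! i) (\<gamma> ! Suc i)"
    using S d i gdist_commute unfolding halfspace_def by auto
  show "last \<gamma> \<in> halfspace S E (\<gamma> ! Suc i) (\<gamma> ! i)"
    using S d i gdist_commute unfolding halfspace_def by auto
qed

end

section \<open>Graphs coarsely equivalent to a line\<close>

locale coarse_line = connected_graph +
  fixes Q :: "int \<Rightarrow> 'a" and proj :: "'a \<Rightarrow> int" and D \<tau> :: nat and \<rho> :: "nat \<Rightarrow> int"
  assumes Q_in: "Q j \<in> S"
    and gdist_proj: "y \<in> S \<Longrightarrow> \<delta> y (Q (proj y)) \<le> D"
    and gdist_Q_step: "\<delta> (Q j) (Q (j + 1)) \<le> \<tau>"
    and proper: "\<delta> (Q i) (Q j) \<le> r \<Longrightarrow> \<bar>i - j\<bar> \<le> \<rho> r"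
begin

lemma proper_nonneg: "0 \<le> \<rho> r"
  using proper[of 0 0 r] gdist_self[OF Q_in] by simp

lemma gdist_Q_le: "int (\<delta> (Q i) (Q j)) \<le> int \<tau> * \<bar>i - j\<bar>"
proof -
  have up: "int (\<delta> (Q i) (Q (i + int n))) \<le> int \<tau> * int n" for i n
  proof (induction n)
    case (Suc n)
    have "\<delta> (Q i) (Q (i + int n + 1)) \<le> \<delta> (Q i) (Q (i + int n)) + \<delta> (Q (i + int n)) (Q (i + int n + 1))"
      by (rule gdist_triangle[OF Q_in Q_in Q_in])
    then have "int (\<delta> (Q i) (Q (i + int n + 1))) \<le> int \<tau> * int n + int \<tau>"
      using Suc gdist_Q_step[of "i + int n"] by linarith
    then show ?case by (simp add: algebra_simps)
  qed (simp add: gdist_self[OF Q_in])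
  show ?thesis
  proof (cases "i \<le> j")
    case True
    then show ?thesis using up[of i "nat (j - i)"] by simp
  next
    case False
    then show ?thesis using up[of j "nat (i - j)"] gdist_commute[OF Q_in Q_in, of i j] by simp
  qed
qed

lemma gdist_le_proj_diff:
  assumes x: "x \<in> S" and y: "y \<in> S"
  shows "int (\<delta> x y) \<le> 2 * int D + int \<tau> * \<bar>proj x - proj y\<bar>"
proof -
  have "\<delta> x y \<le> \<delta> x (Q (proj x)) + \<delta> (Q (proj x)) y" using gdist_triangle x y Q_in by blast
  moreover have "\<delta> (Q (proj x)) y \<le> \<delta> (Q (proj x)) (Q (proj y)) + \<delta> (Q (proj y)) y"
    using gdist_triangle y Q_in by blast
  moreover have "\<delta> (Q (proj y)) y \<le> D" using gdist_proj[OF y] gdist_commute[OF y Q_in] by simp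
  ultimately show ?thesis using gdist_proj[OF x] gdist_Q_le[of "proj x" "proj y"] by linarith
qed

lemma gdist_le_proj_bound:
  "x \<in> S \<Longrightarrow> y \<in> S \<Longrightarrow> \<bar>proj x - proj y\<bar> \<le> Z \<Longrightarrow> int (\<delta> x y) \<le> 2 * int D + int \<tau> * Z"
  using gdist_le_proj_diff[of x y] mult_left_mono[of "\<bar>proj x - proj y\<bar>" Z "int \<tau>"] by linarith

lemma proj_diff_gt_if_far:
  "x \<in> S \<Longrightarrow> y \<in> S \<Longrightarrow> 2 * int D + int \<tau> * Z < int (\<delta> x y) \<Longrightarrow> Z < \<bar>proj x - proj y\<bar>"
  using gdist_le_proj_bound[of x y Z] by linarith

lemma gdist_le_nat_bound:
  assumes "x \<in> S" "y \<in> S" "\<bar>proj x - proj y\<bar> \<le> Z"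
  shows "\<delta> x y \<le> nat (2 * int D + int \<tau> * Z)"
  using gdist_le_proj_bound[OF assms] by linarith

lemma proj_diff_le:
  assumes x: "x \<in> S" and y: "y \<in> S" and d: "\<delta> x y \<le> r"
  shows "\<bar>proj x - proj y\<bar> \<le> \<rho> (2 * D + r)"
proof (rule proper)
  have "\<delta> (Q (proj x)) (Q (proj y)) \<le> \<delta> (Q (proj x)) x + \<delta> x (Q (proj y))"
    using gdist_triangle x Q_in by blast
  moreover have "\<delta> x (Q (proj y)) \<le> \<delta> x y + \<delta> y (Q (proj y))" using gdist_triangle x y Q_in by blast
  moreover have "\<delta> (Q (proj x)) x \<le> D" using gdist_proj[OF x] gdist_commute[OF x Q_in] by simp
  ultimately show "\<delta> (Q (proj x)) (Q (proj y)) \<le> 2 * D + r" using gdist_proj[OF y] d by linarith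
qed

definition "reach = max D \<tau>"
definition "margin = \<rho> (D + reach)"
definition "jump = \<rho> (2 * D + 1)"
definition "gap = margin + 2 * jump"

lemma margin_nonneg: "0 \<le> margin" and jump_nonneg: "0 \<le> jump"
  unfolding margin_def jump_def by (rule proper_nonneg)+

lemma proj_adj_le: "u \<in> S \<Longrightarrow> v \<in> S \<Longrightarrow> E u v \<Longrightarrow> \<bar>proj u - proj v\<bar> \<le> jump"
  unfolding jump_def by (intro proj_diff_le gdist_adj_le_1)

definition proj_splits :: "int \<Rightarrow> int \<Rightarrow> int \<Rightarrow> 'a \<Rightarrow> 'a \<Rightarrow> bool" where
  "proj_splits C \<sigma> j a b \<longleftrightarrow> (\<sigma> = 1 \<or> \<sigma> = -1) \<and>
     (\<forall>y\<in>halfspace S E a b. - C \<le> \<sigma> * (proj y - j)) \<and> (\<forall>y\<in>halfspace S E b a. \<sigma> * (proj y - j) \<le> C)"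

lemma proj_splits_commute: "proj_splits C \<sigma> j a b \<Longrightarrow> proj_splits C (- \<sigma>) j b a"
  unfolding proj_splits_def by auto

lemma proj_splits_mono: "proj_splits C \<sigma> j a b \<Longrightarrow> C \<le> C' \<Longrightarrow> proj_splits C' \<sigma> j a b"
  unfolding proj_splits_def by (meson neg_le_iff_le order_trans)

end

section \<open>Essential hyperplanes of a coarse line\<close>

locale line_hyperplane = coarse_line +
  fixes a b
  assumes a_in: "a \<in> S" and b_in: "b \<in> S" and adj: "E a b"
    and essential: "essential S E a b"
    and gdist_sides: "x \<in> S \<Longrightarrow> \<delta> x b = \<delta> x a + 1 \<or> \<delta> x a = \<delta> x b + 1"
begin

abbreviation "A \<equiv> halfspace S E a b"
abbreviation "B \<equiv> halfspace S E b a"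
abbreviation "K \<equiv> carrier S E a b"

lemma halfspace_cases: "x \<in> S \<Longrightarrow> x \<in> A \<or> x \<in> B"
  using gdist_sides[of x] unfolding halfspace_def by auto

lemma halfspaces_disjoint: "x \<in> A \<Longrightarrow> x \<notin> B"
  unfolding halfspace_def by auto

lemma a_in_A: "a \<in> A" and b_in_B: "b \<in> B"
  using gdist_sides[OF a_in] gdist_sides[OF b_in] a_in b_in gdist_self[OF a_in] gdist_self[OF b_in]
  unfolding halfspace_def by auto

lemma a_in_carrier: "a \<in> K"
  using adj_in_carrier[OF a_in b_in adj] a_in_A b_in_B halfspaces_disjoint by blast

lemma carrier_adj_across:
  assumes "c \<in> K"
  obtains c' where "c' \<in> S" "E c c'" "c \<in> A \<and> c' \<in> B \<or> c \<in> B \<and> c' \<in> A"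
proof -
  obtain d where "(c, d) \<in> dual_edges S E a b" using assms unfolding carrier_def by blast
  then have S: "c \<in> S" "d \<in> S" and e: "E c d" and ne: "\<delta> a c + \<delta> b d \<noteq> \<delta> a d + \<delta> b c"
    unfolding dual_edges_def by auto
  have "\<delta> a c = \<delta> c a" "\<delta> b c = \<delta> c b" "\<delta> a d = \<delta> d a" "\<delta> b d = \<delta> d b"
    using gdist_commute S a_in b_in by auto
  then have "c \<in> A \<and> d \<in> B \<or> c \<in> B \<and> d \<in> A"
    using gdist_sides[OF S(1)] gdist_sides[OF S(2)] ne S unfolding halfspace_def by auto
  then show ?thesis using that S e by blast
qed

lemma deep_A: "\<exists>x\<in>A. \<forall>c\<in>K. R \<le> \<delta> x c"
  using essential unfolding essential_def deep_def by blast

lemma deep_B: "\<exists>x\<in>B. \<forall>c\<in>K. R \<le> \<delta> x c"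
  using essential carrier_commute[of S E a b] unfolding essential_def deep_def by metis

lemma swap: "line_hyperplane S E Q proj D \<tau> \<rho> b a"
proof (rule line_hyperplane.intro[OF coarse_line_axioms line_hyperplane_axioms.intro])
  show "essential S E b a" by (rule essential_commute[OF essential])
qed (use a_in b_in adj_sym[OF adj] gdist_sides in auto)

lemma reflect: "line_hyperplane S E (\<lambda>j. Q (- j)) (\<lambda>y. - proj y) D \<tau> \<rho> a b"
proof (intro line_hyperplane.intro coarse_line.intro coarse_line_axioms.intro line_hyperplane_axioms.intro)
  show "\<delta> (Q (- j)) (Q (- (j + 1))) \<le> \<tau>" for j
    using gdist_Q_step[of "- j - 1"] gdist_commute[OF Q_in Q_in, of "- (j + 1)" "- j"] by simp
  show "\<bar>i - j\<bar> \<le> \<rho> r" if "\<delta> (Q (- i)) (Q (- j)) \<le> r" for i j r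
    using proper[OF that] by simp
qed (use connected_graph_axioms a_in b_in adj essential gdist_sides Q_in gdist_proj in auto)

text \<open>A geodesic from x to a cannot leave the halfspace of x.\<close>

lemma halfspace_walk_to_a:
  assumes x: "x \<in> A"
  obtains xs where "walk_in A E xs" "hd xs = x" "last xs = a"
proof (rule shortest_walk[of x a])
  fix xs assume xs: "walk_in S E xs" "hd xs = x" "last xs = a" "length xs = Suc (\<delta> x a)"
  have "xs ! i \<in> A" if i: "i < length xs" for i
  proof -
    have S: "x \<in> S" "xs ! i \<in> S" using x walk_in_subset[OF xs(1)] i halfspace_subset[of S E a b] by auto
    have "\<delta> x (xs ! i) = i" "\<delta> (xs ! i) a = \<delta> x a - i"
      using shortest_walk_nth_gdist[of xs i] xs i by auto
    moreover have "\<delta> x b \<le> \<delta> x (xs ! i) + \<delta> (xs ! i) b" using gdist_triangle S b_in by blast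
    ultimately show ?thesis using x S i xs(4) unfolding halfspace_def by auto
  qed
  then have "walk_in A E xs" using xs(1) unfolding walk_in_def by (auto simp: in_set_conv_nth)
  then show thesis using that xs by blast
qed (use x halfspace_subset[of S E a b] a_in in auto)

lemma halfspace_meets_band:
  assumes x: "x \<in> A" and sep: "proj x < t \<and> t \<le> proj a \<or> t + jump < proj x \<and> proj a \<le> t + jump"
  shows "\<exists>w\<in>A. t \<le> proj w \<and> proj w \<le> t + jump"
proof -
  obtain xs where xs: "walk_in A E xs" "hd xs = x" "last xs = a" using halfspace_walk_to_a[OF x] .
  have step: "\<bar>proj (xs ! j) - proj (xs ! Suc j)\<bar> \<le> jump" "xs ! Suc j \<in> A" if "Suc j < length xs" for j
  proof -
    have "xs ! j \<in> A" "xs ! Suc j \<in> A" using walk_in_subset[OF xs(1)] that by auto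
    then show "\<bar>proj (xs ! j) - proj (xs ! Suc j)\<bar> \<le> jump" "xs ! Suc j \<in> A"
      using proj_adj_le walk_in_nth_adj[OF xs(1) that] halfspace_subset[of S E a b] by blast+
  qed
  consider "proj x < t" "t \<le> proj a" | "t + jump < proj x" "proj a \<le> t + jump" using sep by blast
  then show ?thesis
  proof cases
    case 1
    then obtain j where "Suc j < length xs" "proj (xs ! j) < t" "\<not> proj (xs ! Suc j) < t"
      using list_transition[of xs "{w. proj w < t}"] xs walk_in_not_Nil by auto
    then show ?thesis using step by force
  next
    case 2
    then obtain j where "Suc j < length xs" "t + jump < proj (xs ! j)" "\<not> t + jump < proj (xs ! Suc j)"
      using list_transition[of xs "{w. t + jump < proj w}"] xs walk_in_not_Nil by auto
    then show ?thesis using step by force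
  qed
qed

lemma same_side_if_far:
  assumes u: "u \<in> S" and v: "v \<in> S" and far: "\<forall>c\<in>K. \<delta> u v < \<delta> u c"
  shows "u \<in> A \<longleftrightarrow> v \<in> A"
proof (rule ccontr)
  assume ne: "\<not> (u \<in> A \<longleftrightarrow> v \<in> A)"
  have "\<exists>p q. dual_edges S E p q = dual_edges S E a b \<and> p \<in> S \<and> q \<in> S \<and>
      u \<in> halfspace S E p q \<and> v \<notin> halfspace S E p q"
  proof (cases "u \<in> A")
    case True
    then show ?thesis using ne a_in b_in by (intro exI[of _ a] exI[of _ b]) simp
  next
    case False
    then have "u \<in> B" "v \<notin> B" using ne halfspace_cases[OF u] halfspaces_disjoint by blast+
    then show ?thesis using dual_edges_commute[of S E b a] a_in b_in by (intro exI[of _ b] exI[of _ a]) simp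
  qed
  then obtain p q where pq: "dual_edges S E p q = dual_edges S E a b" "p \<in> S" "q \<in> S"
    and H: "u \<in> halfspace S E p q" "v \<notin> halfspace S E p q" by blast
  obtain xs where xs: "walk_in S E xs" "hd xs = u" "last xs = v" "length xs = Suc (\<delta> u v)"
    using shortest_walk[OF u v] by blast
  obtain j where j: "Suc j < length xs" "(xs ! j, xs ! Suc j) \<in> dual_edges S E p q"
    using walk_crosses_dual_edge[OF xs(1) pq(2,3)] H xs(2,3) by blast
  then have "xs ! j \<in> K" using pq(1) unfolding carrier_def by blast
  moreover have "\<delta> u (xs ! j) \<le> \<delta> u v" using shortest_walk_nth_gdist[of xs j] xs j by simp
  ultimately show False using far not_le by blast
qed

lemma Q_far_from_carrier:
  assumes "\<forall>c\<in>K. margin < \<bar>proj c - i\<bar>"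
  shows "\<forall>c\<in>K. reach < \<delta> (Q i) c"
proof (rule ballI, rule ccontr)
  fix c assume c: "c \<in> K" and near: "\<not> reach < \<delta> (Q i) c"
  have cS: "c \<in> S" using c carrier_subset[of S E a b] by blast
  have "\<delta> (Q i) (Q (proj c)) \<le> \<delta> (Q i) c + \<delta> c (Q (proj c))" by (rule gdist_triangle[OF Q_in cS Q_in])
  then have "\<delta> (Q i) (Q (proj c)) \<le> D + reach" using gdist_proj[OF cS] near by linarith
  then have "\<bar>i - proj c\<bar> \<le> margin" unfolding margin_def by (rule proper)
  moreover have "margin < \<bar>proj c - i\<bar>" using assms c by blast
  ultimately show False by (simp add: abs_minus_commute)
qed

lemma Q_same_side:
  assumes free: "\<forall>c\<in>K. proj c < i0 - margin \<or> i1 + margin < proj c" and "i0 \<le> i" "i \<le> i1"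
  shows "Q i \<in> A \<longleftrightarrow> Q i0 \<in> A"
proof -
  have *: "Q (i0 + int n) \<in> A \<longleftrightarrow> Q i0 \<in> A" if "i0 + int n \<le> i1" for n
    using that
  proof (induction n)
    case (Suc n)
    let ?j = "i0 + int n"
    have "\<forall>c\<in>K. margin < \<bar>proj c - ?j\<bar>"
    proof
      fix c assume "c \<in> K"
      then have "proj c < i0 - margin \<or> i1 + margin < proj c" using free by blast
      then show "margin < \<bar>proj c - ?j\<bar>" using Suc.prems by arith
    qed
    moreover have "\<delta> (Q ?j) (Q (?j + 1)) \<le> reach" using gdist_Q_step[of ?j] unfolding reach_def by simp
    ultimately have "\<forall>c\<in>K. \<delta> (Q ?j) (Q (?j + 1)) < \<delta> (Q ?j) c"
      using Q_far_from_carrier by (blast intro: le_less_trans)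
    then have "Q ?j \<in> A \<longleftrightarrow> Q (?j + 1) \<in> A" using same_side_if_far Q_in by blast
    moreover have "?j + 1 = i0 + int (Suc n)" by simp
    ultimately show ?case using Suc by simp
  qed simp
  have "i0 + int (nat (i - i0)) = i" using assms(2) by simp
  then show ?thesis using *[of "nat (i - i0)"] assms(3) by simp
qed

lemma proj_band_same_side:
  assumes free: "\<forall>c\<in>K. proj c < i0 - margin \<or> i1 + margin < proj c"
    and y: "y \<in> S" "i0 \<le> proj y" "proj y \<le> i1" and i: "i0 \<le> i" "i \<le> i1"
  shows "y \<in> A \<longleftrightarrow> Q i \<in> A"
proof -
  have "\<forall>c\<in>K. margin < \<bar>proj c - proj y\<bar>"
  proof
    fix c assume "c \<in> K"
    then have "proj c < i0 - margin \<or> i1 + margin < proj c" using free by blast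
    then show "margin < \<bar>proj c - proj y\<bar>" using y by arith
  qed
  then have "\<forall>c\<in>K. reach < \<delta> (Q (proj y)) c" by (rule Q_far_from_carrier)
  moreover have "\<delta> (Q (proj y)) y \<le> reach"
    using gdist_proj[OF y(1)] gdist_commute[OF y(1) Q_in] unfolding reach_def by simp
  ultimately have "\<forall>c\<in>K. \<delta> (Q (proj y)) y < \<delta> (Q (proj y)) c" by (blast intro: le_less_trans)
  then have "Q (proj y) \<in> A \<longleftrightarrow> y \<in> A" using same_side_if_far[OF Q_in y(1)] by blast
  then show ?thesis using Q_same_side[OF free] y i by blast
qed

end

context line_hyperplane
begin

lemma carrier_near_B:
  assumes c: "c \<in> K"
  obtains b' where "b' \<in> B" "\<bar>proj b' - proj c\<bar> \<le> jump"
proof -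
  obtain c' where c': "c' \<in> S" "E c c'" "c \<in> A \<and> c' \<in> B \<or> c \<in> B \<and> c' \<in> A"
    using carrier_adj_across[OF c] by blast
  have "c \<in> S" using c carrier_subset[of S E a b] by blast
  then have "\<bar>proj c' - proj c\<bar> \<le> jump" using proj_adj_le c'(1) adj_sym[OF c'(2)] by blast
  moreover have "\<bar>proj c - proj c\<bar> \<le> jump" using jump_nonneg by simp
  ultimately show ?thesis using that c'(3) by blast
qed

lemma band_not_in_A:
  assumes c1: "c1 \<in> K" "proj c1 < t - jump" and c2: "c2 \<in> K" "t + 2 * jump < proj c2"
    and band: "\<forall>y\<in>S. t \<le> proj y \<and> proj y \<le> t + jump \<longrightarrow> y \<in> A"
  shows False
proof -
  interpret swapped: line_hyperplane S E Q proj D \<tau> \<rho> b a by (rule swap)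
  obtain b1 where b1: "b1 \<in> B" "\<bar>proj b1 - proj c1\<bar> \<le> jump" using carrier_near_B[OF c1(1)] by blast
  obtain b2 where b2: "b2 \<in> B" "\<bar>proj b2 - proj c2\<bar> \<le> jump" using carrier_near_B[OF c2(1)] by blast
  have "proj b1 < t" "t + jump < proj b2" using b1(2) b2(2) c1(2) c2(2) by arith+
  then have "proj b1 < t \<and> t \<le> proj b \<or> t + jump < proj b2 \<and> proj b \<le> t + jump"
    using jump_nonneg by linarith
  then have "\<exists>w\<in>B. t \<le> proj w \<and> proj w \<le> t + jump"
    using swapped.halfspace_meets_band b1(1) b2(1) by blast
  then show False using band halfspaces_disjoint halfspace_subset[of S E b a] by blast
qed

lemma carrier_proj_coarsely_connected:
  assumes c1: "c1 \<in> K" "proj c1 < t - gap" and c2: "c2 \<in> K" "t + gap < proj c2"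
  shows "\<exists>c\<in>K. \<bar>proj c - t\<bar> \<le> gap"
proof (rule ccontr)
  assume none: "\<not> ?thesis"
  have free: "\<forall>c\<in>K. proj c < t - margin \<or> (t + jump) + margin < proj c"
  proof
    fix c assume "c \<in> K"
    then have "gap < \<bar>proj c - t\<bar>" using none by force
    then show "proj c < t - margin \<or> (t + jump) + margin < proj c" using jump_nonneg unfolding gap_def by arith
  qed
  have same: "y \<in> A \<longleftrightarrow> Q t \<in> A" if "y \<in> S" "t \<le> proj y" "proj y \<le> t + jump" for y
    using proj_band_same_side[OF free that order_refl] jump_nonneg by simp
  have c1': "proj c1 < t - jump" and c2': "t + 2 * jump < proj c2"
    using c1(2) c2(2) margin_nonneg jump_nonneg unfolding gap_def by linarith+
  show False
  proof (cases "Q t \<in> A")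
    case True
    then show False using band_not_in_A[OF c1(1) c1' c2(1) c2'] same by blast
  next
    case False
    interpret swapped: line_hyperplane S E Q proj D \<tau> \<rho> b a by (rule swap)
    have "\<forall>y\<in>S. t \<le> proj y \<and> proj y \<le> t + jump \<longrightarrow> y \<in> B" using same False halfspace_cases by blast
    moreover have "c1 \<in> carrier S E b a" "c2 \<in> carrier S E b a" using c1 c2 carrier_commute by metis+
    ultimately show False using swapped.band_not_in_A c1' c2' by blast
  qed
qed

lemma carrier_near_above:
  assumes up: "\<forall>n. \<exists>c\<in>K. n < proj c"
  obtains R where "\<And>y. y \<in> S \<Longrightarrow> t \<le> proj y \<Longrightarrow> \<exists>c\<in>K. \<delta> y c \<le> R"
proof -
  define Z where "Z = max gap (proj a - t)"
  have "\<exists>c\<in>K. \<delta> y c \<le> nat (2 * int D + int \<tau> * Z)" if y: "y \<in> S" "t \<le> proj y" for y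
  proof (cases "proj a + gap < proj y")
    case True
    obtain c2 where "c2 \<in> K" "proj y + gap < proj c2" using up by blast
    then obtain c where c: "c \<in> K" "\<bar>proj c - proj y\<bar> \<le> gap"
      using carrier_proj_coarsely_connected[OF a_in_carrier] True by force
    then have "\<bar>proj y - proj c\<bar> \<le> Z" unfolding Z_def by arith
    then show ?thesis using gdist_le_nat_bound y(1) c(1) carrier_subset[of S E a b] by blast
  next
    case False
    then have "\<bar>proj y - proj a\<bar> \<le> Z" using y(2) unfolding Z_def by arith
    then show ?thesis using gdist_le_nat_bound[OF y(1) a_in] a_in_carrier by blast
  qed
  then show ?thesis using that by blast
qed

lemma carrier_proj_unbounded_below:
  assumes up: "\<forall>n. \<exists>c\<in>K. n < proj c"
  shows "\<exists>c\<in>K. proj c < L"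
proof (rule ccontr)
  assume "\<not> ?thesis"
  then have low: "\<forall>c\<in>K. L \<le> proj c" by (simp add: not_less)
  obtain R where R: "\<And>y. y \<in> S \<Longrightarrow> L - margin \<le> proj y \<Longrightarrow> \<exists>c\<in>K. \<delta> y c \<le> R"
    using carrier_near_above[OF up, where t = "L - margin"] by blast
  have below: "proj y \<le> L - margin - 1" if y: "y \<in> S" and far: "\<forall>c\<in>K. Suc R \<le> \<delta> y c" for y
  proof (rule ccontr)
    assume "\<not> proj y \<le> L - margin - 1"
    then obtain c where "c \<in> K" "\<delta> y c \<le> R" using R[OF y] by auto
    then show False using far by (metis Suc_n_not_le_n le_trans)
  qed
  obtain x where x: "x \<in> A" "\<forall>c\<in>K. Suc R \<le> \<delta> x c" using deep_A[of "Suc R"] by blast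
  obtain z where z: "z \<in> B" "\<forall>c\<in>K. Suc R \<le> \<delta> z c" using deep_B[of "Suc R"] by blast
  have S: "x \<in> S" "z \<in> S" using x(1) z(1) halfspace_subset[of S E] by blast+
  define i0 i1 where "i0 = min (proj x) (proj z)" and "i1 = L - margin - 1"
  have free: "\<forall>c\<in>K. proj c < i0 - margin \<or> i1 + margin < proj c"
  proof
    fix c assume "c \<in> K"
    then have "L \<le> proj c" using low by blast
    then show "proj c < i0 - margin \<or> i1 + margin < proj c" unfolding i1_def by linarith
  qed
  have x': "i0 \<le> proj x" "proj x \<le> i1" and z': "i0 \<le> proj z" "proj z \<le> i1"
    using below[OF S(1) x(2)] below[OF S(2) z(2)] unfolding i0_def i1_def by simp_all
  have "x \<in> A \<longleftrightarrow> Q i1 \<in> A" by (rule proj_band_same_side[OF free S(1) x' order_trans[OF x'] order_refl])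
  moreover have "z \<in> A \<longleftrightarrow> Q i1 \<in> A" by (rule proj_band_same_side[OF free S(2) z' order_trans[OF z'] order_refl])
  ultimately show False using x(1) z(1) halfspaces_disjoint by blast
qed

lemma carrier_proj_unbounded_above:
  assumes down: "\<forall>n. \<exists>c\<in>K. proj c < n"
  shows "\<exists>c\<in>K. L < proj c"
proof -
  interpret reflected: line_hyperplane S E "\<lambda>j. Q (- j)" "\<lambda>y. - proj y" D \<tau> \<rho> a b by (rule reflect)
  have "\<forall>n. \<exists>c\<in>K. n < - proj c"
  proof
    fix n obtain c where "c \<in> K" "proj c < - n" using down by blast
    then show "\<exists>c\<in>K. n < - proj c" by force
  qed
  then obtain c where "c \<in> K" "- proj c < - L" using reflected.carrier_proj_unbounded_below by blast
  then show ?thesis by auto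
qed

lemma carrier_proj_bounded:
  obtains lo hi where "\<forall>c\<in>K. lo \<le> proj c \<and> proj c \<le> hi"
proof -
  have "\<not> ((\<forall>n. \<exists>c\<in>K. n < proj c) \<and> (\<forall>n. \<exists>c\<in>K. proj c < n))"
  proof
    assume both: "(\<forall>n. \<exists>c\<in>K. n < proj c) \<and> (\<forall>n. \<exists>c\<in>K. proj c < n)"
    obtain x where x: "x \<in> A" "\<forall>c\<in>K. Suc (nat (2 * int D + int \<tau> * gap)) \<le> \<delta> x c"
      using deep_A[of "Suc (nat (2 * int D + int \<tau> * gap))"] by blast
    obtain c1 c2 where "c1 \<in> K" "proj c1 < proj x - gap" "c2 \<in> K" "proj x + gap < proj c2"
      using both by blast
    then obtain c where c: "c \<in> K" "\<bar>proj c - proj x\<bar> \<le> gap"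
      using carrier_proj_coarsely_connected by blast
    moreover have "x \<in> S" "c \<in> S" using x(1) c(1) halfspace_subset[of S E] carrier_subset[of S E] by blast+
    ultimately have "\<delta> x c \<le> nat (2 * int D + int \<tau> * gap)"
      using gdist_le_nat_bound by (simp add: abs_minus_commute)
    then show False using x(2) c(1) by fastforce
  qed
  then have "\<not> (\<forall>n. \<exists>c\<in>K. n < proj c)" "\<not> (\<forall>n. \<exists>c\<in>K. proj c < n)"
    using carrier_proj_unbounded_below carrier_proj_unbounded_above by blast+
  then show ?thesis using that by (meson not_le)
qed

lemma deep_proj_outside: "\<exists>x\<in>A. proj x \<le> lo \<or> hi \<le> proj x"
proof -
  define Z where "Z = \<bar>hi - proj a\<bar> + \<bar>proj a - lo\<bar>"
  obtain x where x: "x \<in> A" "\<forall>c\<in>K. Suc (nat (2 * int D + int \<tau> * Z)) \<le> \<delta> x c"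
    using deep_A[of "Suc (nat (2 * int D + int \<tau> * Z))"] by blast
  have "\<not> (lo < proj x \<and> proj x < hi)"
  proof
    assume "lo < proj x \<and> proj x < hi"
    then have "\<bar>proj x - proj a\<bar> \<le> Z" unfolding Z_def by arith
    then have "\<delta> x a \<le> nat (2 * int D + int \<tau> * Z)"
      using gdist_le_nat_bound a_in x(1) halfspace_subset[of S E] by blast
    then show False using x(2) a_in_carrier by fastforce
  qed
  then have "proj x \<le> lo \<or> hi \<le> proj x" by linarith
  then show ?thesis using x(1) by blast
qed

lemma proj_splits_halfspaces: "\<exists>C \<sigma>. proj_splits C \<sigma> 0 a b"
proof -
  interpret swapped: line_hyperplane S E Q proj D \<tau> \<rho> b a by (rule swap)
  obtain lo hi where lh: "\<forall>c\<in>K. lo \<le> proj c \<and> proj c \<le> hi" by (rule carrier_proj_bounded)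
  define iL iR where "iL = lo - margin - 1" and "iR = hi + margin + 1"
  have right: "y \<in> A \<longleftrightarrow> Q iR \<in> A" if "y \<in> S" "iR \<le> proj y" for y
  proof -
    have "\<forall>c\<in>K. proj c < iR - margin \<or> proj y + margin < proj c" using lh unfolding iR_def by auto
    then show ?thesis using proj_band_same_side that by blast
  qed
  have left: "y \<in> A \<longleftrightarrow> Q iL \<in> A" if "y \<in> S" "proj y \<le> iL" for y
  proof -
    have "\<forall>c\<in>K. proj c < proj y - margin \<or> iL + margin < proj c" using lh unfolding iL_def by auto
    then show ?thesis using proj_band_same_side that by blast
  qed
  obtain x where x: "x \<in> A" "proj x \<le> iL \<or> iR \<le> proj x" using deep_proj_outside by blast
  obtain z where z: "z \<in> B" "proj z \<le> iL \<or> iR \<le> proj z" using swapped.deep_proj_outside by blast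
  have "x \<in> S" "z \<in> S" using x(1) z(1) halfspace_subset[of S E] by blast+
  then have sides: "Q iR \<in> A \<longleftrightarrow> Q iL \<notin> A" using right left x z halfspaces_disjoint by blast
  have A: "y \<in> A \<Longrightarrow> Q iR \<in> A \<and> iL < proj y \<or> Q iR \<notin> A \<and> proj y < iR" for y
    using right left sides halfspace_subset[of S E a b] by (meson not_le subsetD)
  have B: "y \<in> B \<Longrightarrow> Q iR \<in> A \<and> proj y < iR \<or> Q iR \<notin> A \<and> iL < proj y" for y
    using right left sides halfspaces_disjoint halfspace_subset[of S E b a] by (meson not_le subsetD)
  define C where "C = \<bar>iL\<bar> + \<bar>iR\<bar>"
  have C: "iL < u \<Longrightarrow> - C \<le> u" "u < iR \<Longrightarrow> u \<le> C" for u unfolding C_def by arith+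
  show ?thesis
  proof (cases "Q iR \<in> A")
    case True
    then have "\<forall>y\<in>A. - C \<le> proj y" "\<forall>y\<in>B. proj y \<le> C" using A B C by blast+
    then have "proj_splits C 1 0 a b" unfolding proj_splits_def by simp
    then show ?thesis by blast
  next
    case False
    then have "\<forall>y\<in>A. proj y \<le> C" "\<forall>y\<in>B. - C \<le> proj y" using A B C by blast+
    then have "proj_splits C (- 1) 0 a b" unfolding proj_splits_def by (simp add: minus_le_iff)
    then show ?thesis by blast
  qed
qed

end

section \<open>Quasilines\<close>

lemma finite_uniform_bound:
  fixes P :: "'a \<Rightarrow> int \<Rightarrow> bool"
  assumes "finite R" and "\<And>r. r \<in> R \<Longrightarrow> \<exists>C. P r C" and mono: "\<And>r C C'. P r C \<Longrightarrow> C \<le> C' \<Longrightarrow> P r C'"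
  shows "\<exists>C. \<forall>r\<in>R. P r C"
  using assms(1,2)
proof (induction R rule: finite_induct)
  case (insert r R)
  obtain C where "\<forall>r\<in>R. P r C" using insert by blast
  moreover obtain C' where "P r C'" using insert by blast
  ultimately have "\<forall>r'\<in>R. P r' (max C C')" "P r (max C C')"
    using mono[OF _ max.cobounded1] mono[OF _ max.cobounded2] by blast+
  then show ?case by blast
qed simp

locale quasiline_space =
  fixes E :: "'v \<Rightarrow> 'v \<Rightarrow> bool" and G :: "('v \<Rightarrow> 'v) set" and Y :: "'v set" and \<phi> :: "'v \<Rightarrow> 'v"
  assumes median: "median_graph E" and locally_finite: "locally_finite E"
    and free_cocompact: "free_cocompact_group E G" and quasiline: "quasiline E G Y \<phi>"
begin

lemma convex: "convex_set E Y"
  using quasiline unfolding quasiline_def by blast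

sublocale connected_graph Y E
  by (rule convex_connected_graph[OF median convex])

lemma aut_on_phi: "aut_on E Y \<phi>"
  using quasiline free_cocompact unfolding quasiline_def free_cocompact_group_def aut_on_def by blast

lemma bij_phi: "bij \<phi>"
  using aut_on_phi unfolding aut_on_def graph_aut_def by blast

abbreviation "T \<equiv> fpow \<phi>"

lemma aut_on_T: "aut_on E Y (T k)"
  by (rule aut_on_fpow[OF aut_on_phi])

lemma T_in: "x \<in> Y \<Longrightarrow> T k x \<in> Y"
  using aut_on_mem_iff[OF aut_on_T] by blast

lemma gdist_T: "x \<in> Y \<Longrightarrow> y \<in> Y \<Longrightarrow> \<delta> (T k x) (T k y) = \<delta> x y"
  by (rule gdist_aut_on[OF aut_on_T])

lemma T_T: "T i (T j x) = T (i + j) x"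
  by (rule fpow_apply_add[OF bij_phi])

lemma halfspace_cover:
  "a \<in> Y \<Longrightarrow> b \<in> Y \<Longrightarrow> E a b \<Longrightarrow> y \<in> Y \<Longrightarrow> y \<in> halfspace Y E a b \<or> y \<in> halfspace Y E b a"
  using median_gdist_adj_cases[OF median convex] unfolding halfspace_def by fastforce

lemma essential_unbounded:
  assumes "a \<in> Y" "b \<in> Y" "E a b" "essential Y E a b"
  shows "\<exists>x\<in>Y. R \<le> \<delta> x a"
proof -
  have "a \<in> carrier Y E a b" using adj_in_carrier assms median_graph_irrefl[OF median] by blast
  then show ?thesis using assms(4) halfspace_subset[of Y E a b] unfolding essential_def deep_def by blast
qed

definition "fundamental = (SOME F. finite F \<and> F \<subseteq> Y \<and> Y \<subseteq> (\<Union>k. T k ` F))"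

lemma fundamental: "finite fundamental" "fundamental \<subseteq> Y" "Y \<subseteq> (\<Union>k. T k ` fundamental)"
  using someI_ex[of "\<lambda>F. finite F \<and> F \<subseteq> Y \<and> Y \<subseteq> (\<Union>k. T k ` F)"] quasiline
  unfolding fundamental_def quasiline_def by blast+

definition "base = (SOME p. p \<in> Y)"

lemma base_in: "base \<in> Y"
  using quasiline someI_ex[of "\<lambda>p. p \<in> Y"] unfolding base_def quasiline_def by blast

definition "orbit j = T j base"
definition "orbit_reach = (\<Sum>f\<in>fundamental. \<delta> f base)"
definition "orbit_step = \<delta> base (T 1 base)"

lemma orbit_in: "orbit j \<in> Y"
  unfolding orbit_def using T_in base_in by blast

lemma T_orbit: "T s (orbit j) = orbit (s + j)"
  unfolding orbit_def by (rule T_T)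

lemma near_orbit:
  assumes y: "y \<in> Y" shows "\<exists>j. \<delta> y (orbit j) \<le> orbit_reach"
proof -
  obtain k f where f: "f \<in> fundamental" "y = T k f" using fundamental(3) y by blast
  then have "\<delta> y (orbit k) = \<delta> f base" unfolding orbit_def using gdist_T fundamental(2) base_in by blast
  also have "\<dots> \<le> orbit_reach"
    unfolding orbit_reach_def by (rule member_le_sum[OF f(1)]) (simp_all add: fundamental(1))
  finally show ?thesis by blast
qed

definition "orbit_proj y = (SOME j. \<delta> y (orbit j) \<le> orbit_reach)"

lemma gdist_orbit_proj: "y \<in> Y \<Longrightarrow> \<delta> y (orbit (orbit_proj y)) \<le> orbit_reach"
  unfolding orbit_proj_def using someI_ex[OF near_orbit] by blast

lemma gdist_orbit_step: "\<delta> (orbit j) (orbit (j + 1)) \<le> orbit_step"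
  using gdist_T[OF base_in T_in[OF base_in], of j 1] T_T[of j 1 base]
  unfolding orbit_def orbit_step_def by simp

end

text \<open>When Y is bounded there are no essential hyperplanes, so only unbounded quasilines matter;
  for them the orbit of the base point is injective, hence a proper coarse parametrisation.\<close>

locale unbounded_quasiline = quasiline_space +
  assumes unbounded: "\<exists>x\<in>Y. \<exists>y\<in>Y. R \<le> gdist Y E x y"
begin

lemma orbit_aperiodic:
  assumes n: "0 < n" shows "orbit n \<noteq> base"
proof
  assume per: "orbit n = base"
  have "T (n * q) base = base" for q
  proof (induction q rule: int_induct[where k = 0])
    case (step1 q)
    have "T (n * (q + 1)) base = T (n * q) (orbit n)" using T_T unfolding orbit_def by (simp add: algebra_simps)
    then show ?case using per step1 by simp
  next
    case (step2 q)
    have "T (n * q) base = T (n * (q - 1)) (orbit n)" using T_T unfolding orbit_def by (simp add: algebra_simps)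
    then show ?case using per step2 by simp
  qed simp
  then have mod: "orbit j = orbit (j mod n)" for j
    using T_T[of "j mod n" "n * (j div n)" base] unfolding orbit_def by (simp add: mod_mult_div_eq)
  define R where "R = orbit_reach + (\<Sum>i\<in>{0..<n}. \<delta> (orbit i) base)"
  have near_base: "\<delta> y base \<le> R" if y: "y \<in> Y" for y
  proof -
    let ?j = "orbit_proj y mod n"
    have "\<delta> (orbit ?j) base \<le> (\<Sum>i\<in>{0..<n}. \<delta> (orbit i) base)"
      by (rule member_le_sum) (use n in simp_all)
    moreover have "\<delta> y base \<le> \<delta> y (orbit ?j) + \<delta> (orbit ?j) base"
      using gdist_triangle[OF y orbit_in base_in] .
    moreover have "\<delta> y (orbit ?j) \<le> orbit_reach" using gdist_orbit_proj[OF y] mod by metis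
    ultimately show ?thesis unfolding R_def by linarith
  qed
  obtain x y where xy: "x \<in> Y" "y \<in> Y" "Suc (2 * R) \<le> \<delta> x y" using unbounded by blast
  have "\<delta> x y \<le> \<delta> x base + \<delta> base y" using gdist_triangle[OF xy(1) base_in xy(2)] .
  moreover have "\<delta> base y = \<delta> y base" using gdist_commute[OF base_in xy(2)] .
  ultimately show False using near_base[OF xy(1)] near_base[OF xy(2)] xy(3) by linarith
qed

lemma orbit_inj: "inj orbit"
proof (rule injI, rule ccontr)
  fix i j assume eq: "orbit i = orbit j" and ne: "i \<noteq> j"
  have "orbit (j - i) = base" "orbit (i - j) = base"
    using T_orbit[of "- i" j] T_orbit[of "- i" i] T_orbit[of "- j" i] T_orbit[of "- j" j] eq
    unfolding orbit_def by simp_all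
  then show False using orbit_aperiodic ne by (cases "i < j") auto
qed

definition "orbit_gauge r = (\<Sum>m\<in>{m. \<delta> base (orbit m) \<le> r}. \<bar>m\<bar>)"

lemma finite_orbit_ball: "finite {m. \<delta> base (orbit m) \<le> r}"
proof -
  have "orbit ` {m. \<delta> base (orbit m) \<le> r} \<subseteq> {y \<in> Y. \<delta> base y \<le> r}" using orbit_in by blast
  moreover have "finite {y \<in> Y. \<delta> base y \<le> r}"
    by (rule finite_gdist_ball[OF _ base_in]) (use locally_finite in \<open>simp add: locally_finite_def\<close>)
  ultimately have "finite (orbit ` {m. \<delta> base (orbit m) \<le> r})" by (rule finite_subset)
  then show ?thesis by (rule finite_imageD[OF _ inj_on_subset[OF orbit_inj subset_UNIV]])
qed

lemma orbit_proper: "\<delta> (orbit i) (orbit j) \<le> r \<Longrightarrow> \<bar>i - j\<bar> \<le> orbit_gauge r"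
proof -
  assume "\<delta> (orbit i) (orbit j) \<le> r"
  moreover have "\<delta> base (orbit (j - i)) = \<delta> (orbit i) (orbit j)"
    using gdist_T[OF orbit_in orbit_in, of "- i" i j] T_orbit unfolding orbit_def by simp
  ultimately have "\<bar>j - i\<bar> \<le> orbit_gauge r"
    unfolding orbit_gauge_def by (intro member_le_sum finite_orbit_ball) simp_all
  then show ?thesis by simp
qed

sublocale coarse_line Y E orbit orbit_proj orbit_reach orbit_step orbit_gauge
  by unfold_locales (use orbit_in gdist_orbit_proj gdist_orbit_step orbit_proper in auto)

end

lemma abs_mult_sign: "\<sigma> = 1 \<or> \<sigma> = -1 \<Longrightarrow> \<bar>\<sigma> * w\<bar> = \<bar>w :: int\<bar>"
  by auto

context unbounded_quasiline
begin

abbreviation "\<rho>0 \<equiv> orbit_gauge (2 * orbit_reach)"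

lemma line_hyperplane_essential:
  assumes "a \<in> Y" "b \<in> Y" "E a b" "essential Y E a b"
  shows "line_hyperplane Y E orbit orbit_proj orbit_reach orbit_step orbit_gauge a b"
  by (rule line_hyperplane.intro[OF coarse_line_axioms line_hyperplane_axioms.intro])
    (use assms median_gdist_adj_cases[OF median convex] in auto)

lemma orbit_proj_T: assumes y: "y \<in> Y" shows "\<bar>orbit_proj (T s y) - (orbit_proj y + s)\<bar> \<le> \<rho>0"
proof (rule orbit_proper)
  have "\<delta> (T s y) (orbit (orbit_proj y + s)) = \<delta> y (orbit (orbit_proj y))"
    using gdist_T[OF y orbit_in] T_orbit by (simp add: add.commute)
  then have "\<delta> (T s y) (orbit (orbit_proj y + s)) \<le> orbit_reach" using gdist_orbit_proj[OF y] by simp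
  moreover have "\<delta> (orbit (orbit_proj (T s y))) (T s y) \<le> orbit_reach"
    using gdist_orbit_proj[OF T_in[OF y]] gdist_commute[OF T_in[OF y] orbit_in] by simp
  moreover have "\<delta> (orbit (orbit_proj (T s y))) (orbit (orbit_proj y + s)) \<le>
      \<delta> (orbit (orbit_proj (T s y))) (T s y) + \<delta> (T s y) (orbit (orbit_proj y + s))"
    using gdist_triangle[OF orbit_in T_in[OF y] orbit_in] .
  ultimately show "\<delta> (orbit (orbit_proj (T s y))) (orbit (orbit_proj y + s)) \<le> 2 * orbit_reach" by linarith
qed

lemma orbit_proj_T_sign:
  assumes "y \<in> Y" "\<sigma> = 1 \<or> \<sigma> = -1"
  shows "\<bar>\<sigma> * (orbit_proj (T s y) - j) - \<sigma> * (orbit_proj y - j)\<bar> \<le> \<bar>s\<bar> + \<rho>0"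
proof -
  have "\<sigma> * (orbit_proj (T s y) - j) - \<sigma> * (orbit_proj y - j) = \<sigma> * (orbit_proj (T s y) - orbit_proj y)"
    by (simp add: algebra_simps)
  then show ?thesis
    using orbit_proj_T[OF assms(1), of s] abs_mult_sign[OF assms(2), of "orbit_proj (T s y) - orbit_proj y"]
    by arith
qed

lemma proj_splits_T:
  assumes split: "proj_splits C \<sigma> j (T s a) (T s b)" and ab: "a \<in> Y" "b \<in> Y"
  shows "proj_splits (C + \<rho>0) \<sigma> (j - s) a b"
proof -
  have \<sigma>: "\<sigma> = 1 \<or> \<sigma> = -1" using split unfolding proj_splits_def by blast
  have shift: "\<bar>\<sigma> * (orbit_proj y - (j - s)) - \<sigma> * (orbit_proj (T s y) - j)\<bar> \<le> \<rho>0" if "y \<in> Y" for y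
  proof -
    have "\<sigma> * (orbit_proj y - (j - s)) - \<sigma> * (orbit_proj (T s y) - j) = \<sigma> * (orbit_proj y + s - orbit_proj (T s y))"
      by (simp add: algebra_simps)
    then show ?thesis using orbit_proj_T[OF that, of s] abs_mult_sign[OF \<sigma>] by (simp add: abs_minus_commute)
  qed
  have "- C \<le> \<sigma> * (orbit_proj (T s y) - j)" if "y \<in> halfspace Y E a b" for y
    using split halfspace_aut_on[OF aut_on_T ab that] unfolding proj_splits_def by blast
  moreover have "\<sigma> * (orbit_proj (T s y) - j) \<le> C" if "y \<in> halfspace Y E b a" for y
    using split halfspace_aut_on[OF aut_on_T ab(2,1) that] unfolding proj_splits_def by blast
  ultimately show ?thesis
    using \<sigma> shift halfspace_subset[of Y E] unfolding proj_splits_def by (smt (verit) subsetD)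
qed

lemma finite_fundamental_edges:
  "finite {(f, c). f \<in> fundamental \<and> c \<in> Y \<and> E f c \<and> essential Y E f c}"
proof (rule finite_subset)
  show "finite (Sigma fundamental (\<lambda>f. {c. E f c}))"
    using fundamental(1) locally_finite unfolding locally_finite_def by blast
qed auto

text \<open>Cocompactness: every essential edge is a translate of one of finitely many edges at the
  fundamental set, and translating a hyperplane shifts its projection by a bounded error.\<close>

lemma uniform_proj_splits:
  obtains C where "0 \<le> C"
    and "\<And>a b. a \<in> Y \<Longrightarrow> b \<in> Y \<Longrightarrow> E a b \<Longrightarrow> essential Y E a b \<Longrightarrow> \<exists>\<sigma> j. proj_splits C \<sigma> j a b"
proof -
  define reps where "reps = {(f, c). f \<in> fundamental \<and> c \<in> Y \<and> E f c \<and> essential Y E f c}"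
  have "\<exists>C \<sigma> j. proj_splits C \<sigma> j (fst r) (snd r)" if r: "r \<in> reps" for r
  proof -
    obtain f c where fc: "r = (f, c)" "f \<in> Y" "c \<in> Y" "E f c" "essential Y E f c"
      using r fundamental(2) unfolding reps_def by auto
    obtain C \<sigma> where "proj_splits C \<sigma> 0 f c"
      using line_hyperplane.proj_splits_halfspaces[OF line_hyperplane_essential[OF fc(2-5)]] by blast
    then show ?thesis using fc(1) by auto
  qed
  then obtain C0 where C0: "\<forall>r\<in>reps. \<exists>\<sigma> j. proj_splits C0 \<sigma> j (fst r) (snd r)"
    using finite_uniform_bound[of reps "\<lambda>r C. \<exists>\<sigma> j. proj_splits C \<sigma> j (fst r) (snd r)"]
      finite_fundamental_edges proj_splits_mono unfolding reps_def by blast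
  define C where "C = max 0 C0 + \<rho>0"
  have "\<exists>\<sigma> j. proj_splits C \<sigma> j a b" if ab: "a \<in> Y" "b \<in> Y" "E a b" "essential Y E a b" for a b
  proof -
    obtain k f where f: "f \<in> fundamental" "a = T k f" using fundamental(3) ab(1) by blast
    have Ta: "T (- k) a = f" using T_T[of "- k" k f] f(2) by simp
    have "(T (- k) a, T (- k) b) \<in> reps"
      using essential_aut_on[OF aut_on_T ab(1,2,4)] aut_on_adj_iff[OF aut_on_T] T_in ab Ta f(1)
      unfolding reps_def by auto
    then obtain \<sigma> j where "proj_splits C0 \<sigma> j (T (- k) a) (T (- k) b)" using C0 by fastforce
    then have "proj_splits (C0 + \<rho>0) \<sigma> (j + k) a b" using proj_splits_T ab by fastforce
    then have "proj_splits C \<sigma> (j + k) a b" by (rule proj_splits_mono) (simp add: C_def)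
    then show ?thesis by blast
  qed
  moreover have "0 \<le> C" using proper_nonneg unfolding C_def by simp
  ultimately show ?thesis using that by blast
qed

lemma halfspace_translate_gdist:
  assumes split: "proj_splits C \<sigma> j a b"
    and x: "x \<in> halfspace Y E a b \<inter> T s ` halfspace Y E b a"
    and y: "y \<in> halfspace Y E a b \<inter> T s ` halfspace Y E b a"
  shows "int (\<delta> x y) \<le> 2 * int orbit_reach + int orbit_step * (2 * C + \<bar>s\<bar> + \<rho>0)"
proof -
  have \<sigma>: "\<sigma> = 1 \<or> \<sigma> = -1" using split unfolding proj_splits_def by blast
  have bound: "- C \<le> \<sigma> * (orbit_proj u - j) \<and> \<sigma> * (orbit_proj u - j) \<le> C + \<bar>s\<bar> + \<rho>0"
    if u: "u \<in> halfspace Y E a b \<inter> T s ` halfspace Y E b a" for u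
  proof -
    obtain z where z: "z \<in> halfspace Y E b a" "u = T s z" using u by blast
    have "z \<in> Y" using z(1) halfspace_subset[of Y E b a] by blast
    then have "\<bar>\<sigma> * (orbit_proj u - j) - \<sigma> * (orbit_proj z - j)\<bar> \<le> \<bar>s\<bar> + \<rho>0"
      unfolding z(2) by (rule orbit_proj_T_sign[OF _ \<sigma>])
    then have "\<sigma> * (orbit_proj u - j) - \<sigma> * (orbit_proj z - j) \<le> \<bar>s\<bar> + \<rho>0" by (rule abs_le_D1)
    moreover have "\<sigma> * (orbit_proj z - j) \<le> C" "- C \<le> \<sigma> * (orbit_proj u - j)"
      using split z(1) u unfolding proj_splits_def by blast+
    ultimately show ?thesis by linarith
  qed
  have "\<bar>orbit_proj x - orbit_proj y\<bar> = \<bar>\<sigma> * (orbit_proj x - j) - \<sigma> * (orbit_proj y - j)\<bar>"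
    using abs_mult_sign[OF \<sigma>, of "orbit_proj x - orbit_proj y"] by (simp add: algebra_simps)
  also have "\<dots> \<le> 2 * C + \<bar>s\<bar> + \<rho>0"
    using bound[OF x] bound[OF y] by (intro abs_leI) linarith+
  finally have "\<bar>orbit_proj x - orbit_proj y\<bar> \<le> 2 * C + \<bar>s\<bar> + \<rho>0" .
  moreover have "x \<in> Y" "y \<in> Y" using x y halfspace_subset[of Y E a b] by blast+
  ultimately show ?thesis using gdist_le_proj_bound by blast
qed

lemma proj_high_in_halfspace:
  assumes "proj_splits C \<sigma> j a b" "a \<in> Y" "b \<in> Y" "E a b" "y \<in> Y" "C < \<sigma> * (orbit_proj y - j)"
  shows "y \<in> halfspace Y E a b"
  using assms halfspace_cover[of a b y] unfolding proj_splits_def by force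

lemma translate_in_halfspace:
  assumes split: "proj_splits C \<sigma> j a b" and ab: "a \<in> Y" "b \<in> Y" "E a b" and y: "y \<in> Y"
    and high: "C + \<bar>s\<bar> + \<rho>0 < \<sigma> * (orbit_proj y - j)"
  shows "y \<in> halfspace Y E (T s a) (T s b)"
proof -
  have \<sigma>: "\<sigma> = 1 \<or> \<sigma> = -1" using split unfolding proj_splits_def by blast
  have "\<bar>\<sigma> * (orbit_proj (T (- s) y) - j) - \<sigma> * (orbit_proj y - j)\<bar> \<le> \<bar>s\<bar> + \<rho>0"
    using orbit_proj_T_sign[OF y \<sigma>, of "- s"] by simp
  then have "- (\<sigma> * (orbit_proj (T (- s) y) - j) - \<sigma> * (orbit_proj y - j)) \<le> \<bar>s\<bar> + \<rho>0"
    by (rule abs_le_D2)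
  then have "C < \<sigma> * (orbit_proj (T (- s) y) - j)" using high by linarith
  then have "T (- s) y \<in> halfspace Y E a b" by (rule proj_high_in_halfspace[OF split ab T_in[OF y]])
  then have "T s (T (- s) y) \<in> halfspace Y E (T s a) (T s b)" by (rule halfspace_aut_on[OF aut_on_T ab(1,2)])
  then show ?thesis using T_T[of s "- s" y] by simp
qed

lemma proj_far_from_adj:
  assumes split: "proj_splits C \<sigma> j a b" and ab: "a \<in> Y" "b \<in> Y" "E a b"
    and p: "p \<in> halfspace Y E a b" and "0 \<le> Z" and far: "2 * C + jump + Z < \<bar>orbit_proj p - orbit_proj a\<bar>"
  shows "C + Z < \<sigma> * (orbit_proj p - j)"
proof -
  have \<sigma>: "\<sigma> = 1 \<or> \<sigma> = -1" using split unfolding proj_splits_def by blast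
  have "a \<noteq> b" using median_graph_irrefl[OF median ab(3)] .
  then have "a \<in> halfspace Y E a b" "b \<in> halfspace Y E b a" using adj_in_own_halfspace ab by auto
  then have a: "- C \<le> \<sigma> * (orbit_proj a - j)" and b: "\<sigma> * (orbit_proj b - j) \<le> C"
    and p': "- C \<le> \<sigma> * (orbit_proj p - j)"
    using split p unfolding proj_splits_def by blast+
  have "\<bar>\<sigma> * (orbit_proj a - j) - \<sigma> * (orbit_proj b - j)\<bar> \<le> jump"
    using proj_adj_le[OF ab] abs_mult_sign[OF \<sigma>, of "orbit_proj a - orbit_proj b"] by (simp add: algebra_simps)
  then have a': "\<sigma> * (orbit_proj a - j) \<le> C + jump" using b abs_le_D1 by linarith
  have eq: "\<bar>orbit_proj p - orbit_proj a\<bar> = \<bar>\<sigma> * (orbit_proj p - j) - \<sigma> * (orbit_proj a - j)\<bar>"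
    using abs_mult_sign[OF \<sigma>, of "orbit_proj p - orbit_proj a"] by (simp add: algebra_simps)
  show ?thesis
  proof (rule ccontr)
    assume "\<not> C + Z < \<sigma> * (orbit_proj p - j)"
    then have "\<bar>\<sigma> * (orbit_proj p - j) - \<sigma> * (orbit_proj a - j)\<bar> \<le> 2 * C + jump + Z"
      using a a' p' jump_nonneg \<open>0 \<le> Z\<close> by (intro abs_leI) linarith+
    then show False using far eq by linarith
  qed
qed

lemma geodesic_crosses_translate:
  assumes split: "proj_splits C \<sigma> j (\<gamma> ! i) (\<gamma> ! Suc i)" and geo: "geodesic_in Y E \<gamma>" and i: "Suc i < length \<gamma>"
    and far_hd: "2 * int orbit_reach + int orbit_step * (2 * C + jump + \<bar>s\<bar> + \<rho>0) < int (\<delta> (hd \<gamma>) (\<gamma> ! i))"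
    and far_last: "2 * int orbit_reach + int orbit_step * (2 * C + jump + \<bar>s\<bar> + \<rho>0) < int (\<delta> (last \<gamma>) (\<gamma> ! Suc i))"
  shows "\<exists>j'. Suc j' < length \<gamma> \<and> (\<gamma> ! j', \<gamma> ! Suc j') \<in> dual_edges Y E (T s (\<gamma> ! i)) (T s (\<gamma> ! Suc i))"
proof -
  let ?a = "\<gamma> ! i" and ?b = "\<gamma> ! Suc i"
  have w: "walk_in Y E \<gamma>" using geo unfolding geodesic_in_def by blast
  have ab: "?a \<in> Y" "?b \<in> Y" "E ?a ?b" using geodesic_in_adj[OF geo i] by auto
  have ends: "hd \<gamma> \<in> Y" "last \<gamma> \<in> Y" using walk_in_subset[OF w] walk_in_not_Nil[OF w] by auto
  have Z: "0 \<le> \<bar>s\<bar> + \<rho>0" using proper_nonneg by simp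
  have "2 * C + jump + (\<bar>s\<bar> + \<rho>0) < \<bar>orbit_proj (hd \<gamma>) - orbit_proj ?a\<bar>"
    using proj_diff_gt_if_far[OF ends(1) ab(1)] far_hd by (simp add: add.assoc)
  then have "C + (\<bar>s\<bar> + \<rho>0) < \<sigma> * (orbit_proj (hd \<gamma>) - j)"
    using proj_far_from_adj[OF split ab geodesic_halfspaces(1)[OF geo i] Z] by blast
  then have hd_in: "hd \<gamma> \<in> halfspace Y E (T s ?a) (T s ?b)"
    using translate_in_halfspace[OF split ab ends(1)] by (simp add: add.assoc)
  have "2 * C + jump + (\<bar>s\<bar> + \<rho>0) < \<bar>orbit_proj (last \<gamma>) - orbit_proj ?b\<bar>"
    using proj_diff_gt_if_far[OF ends(2) ab(2)] far_last by (simp add: add.assoc)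
  then have "C + (\<bar>s\<bar> + \<rho>0) < - \<sigma> * (orbit_proj (last \<gamma>) - j)"
    using proj_far_from_adj[OF proj_splits_commute[OF split] ab(2,1) adj_sym[OF ab(3)] geodesic_halfspaces(2)[OF geo i] Z]
    by blast
  then have "last \<gamma> \<in> halfspace Y E (T s ?b) (T s ?a)"
    using translate_in_halfspace[OF proj_splits_commute[OF split] ab(2,1) adj_sym[OF ab(3)] ends(2)]
    by (simp add: add.assoc)
  then have "last \<gamma> \<notin> halfspace Y E (T s ?a) (T s ?b)" unfolding halfspace_def by auto
  then show ?thesis using walk_crosses_dual_edge[OF w T_in[OF ab(1)] T_in[OF ab(2)] hd_in] by blast
qed

end

lemma real_bound_of_int_bound:
  assumes "int n \<le> int k * N" "of_int N \<le> N'"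
  shows "real n \<le> real k * N'"
proof -
  have "real n \<le> real k * of_int N" using assms(1) by (metis of_int_le_iff of_int_mult of_int_of_nat_eq)
  also have "\<dots> \<le> real k * N'" using assms(2) by (simp add: mult_left_mono)
  finally show ?thesis .
qed

lemma int_bound_of_real_bound:
  assumes "real k * M' \<le> real n" "of_int M \<le> M'"
  shows "int k * M \<le> int n"
proof -
  have "real k * of_int M \<le> real n" using assms mult_left_mono[of "of_int M" M' "real k"] by simp
  then show ?thesis by (metis of_int_le_iff of_int_mult of_int_of_nat_eq)
qed

context unbounded_quasiline
begin

lemma halfspace_translate_gdist_linear:
  assumes "0 \<le> C" "proj_splits C \<sigma> j a b" "0 < k" "\<bar>s\<bar> = int k"
    and "x \<in> halfspace Y E a b \<inter> T s ` halfspace Y E b a" "y \<in> halfspace Y E a b \<inter> T s ` halfspace Y E b a"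
  shows "int (\<delta> x y) \<le> int k * (2 * int orbit_reach + int orbit_step * (2 * C + jump + \<rho>0 + 1))"
proof -
  define X where "X = 2 * int orbit_reach + int orbit_step * (2 * C + jump + \<rho>0)"
  have "0 \<le> X" unfolding X_def using assms(1) jump_nonneg proper_nonneg by simp
  then have "X \<le> int k * X" using mult_right_mono[of 1 "int k" X] assms(3) by simp
  have "int (\<delta> x y) \<le> 2 * int orbit_reach + int orbit_step * (2 * C + \<bar>s\<bar> + \<rho>0)"
    using halfspace_translate_gdist assms(2,5,6) by blast
  also have "\<dots> \<le> X + int orbit_step * int k"
    unfolding X_def assms(4) using jump_nonneg by (simp add: algebra_simps mult_left_mono)
  also have "\<dots> \<le> int k * (2 * int orbit_reach + int orbit_step * (2 * C + jump + \<rho>0 + 1))"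
    using \<open>X \<le> int k * X\<close> unfolding X_def by (simp add: algebra_simps)
  finally show ?thesis .
qed

lemma geodesic_crosses_translate_linear:
  assumes "0 \<le> C" "proj_splits C \<sigma> j (\<gamma> ! i) (\<gamma> ! Suc i)" "geodesic_in Y E \<gamma>" "Suc i < length \<gamma>"
    and "0 < k" "\<bar>s\<bar> = int k"
    and "int k * (2 * int orbit_reach + int orbit_step * (2 * C + jump + \<rho>0 + 1) + 1) \<le> int (\<delta> (hd \<gamma>) (\<gamma> ! i))"
    and "int k * (2 * int orbit_reach + int orbit_step * (2 * C + jump + \<rho>0 + 1) + 1) \<le> int (\<delta> (last \<gamma>) (\<gamma> ! Suc i))"
  shows "\<exists>j'. Suc j' < length \<gamma> \<and> (\<gamma> ! j', \<gamma> ! Suc j') \<in> dual_edges Y E (T s (\<gamma> ! i)) (T s (\<gamma> ! Suc i))"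
proof -
  define X where "X = 2 * int orbit_reach + int orbit_step * (2 * C + jump + \<rho>0)"
  have "0 \<le> X" unfolding X_def using assms(1) jump_nonneg proper_nonneg by simp
  then have "X \<le> int k * X" using mult_right_mono[of 1 "int k" X] assms(5) by simp
  have "2 * int orbit_reach + int orbit_step * (2 * C + jump + \<bar>s\<bar> + \<rho>0) = X + int orbit_step * int k"
    unfolding X_def assms(6) by (simp add: algebra_simps)
  also have "\<dots> < int k * (2 * int orbit_reach + int orbit_step * (2 * C + jump + \<rho>0 + 1) + 1)"
    using \<open>X \<le> int k * X\<close> assms(5) unfolding X_def by (simp add: algebra_simps)
  finally have "2 * int orbit_reach + int orbit_step * (2 * C + jump + \<bar>s\<bar> + \<rho>0) < int (\<delta> (hd \<gamma>) (\<gamma> ! i))"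
    "2 * int orbit_reach + int orbit_step * (2 * C + jump + \<bar>s\<bar> + \<rho>0) < int (\<delta> (last \<gamma>) (\<gamma> ! Suc i))"
    using assms(7,8) by linarith+
  then show ?thesis by (rule geodesic_crosses_translate[OF assms(2-4)])
qed

lemma translation_constants:
  "\<exists>N M :: real. \<forall>N' \<ge> N. \<forall>M' \<ge> M. \<forall>k::nat. 0 < k \<longrightarrow>
     (\<forall>a b. a \<in> Y \<and> b \<in> Y \<and> E a b \<and> essential Y E a b \<longrightarrow>
        (\<forall>s \<in> {int k, - int k}.
           \<forall>x \<in> halfspace Y E a b \<inter> T s ` halfspace Y E b a.
           \<forall>y \<in> halfspace Y E a b \<inter> T s ` halfspace Y E b a. real (\<delta> x y) \<le> real k * N')) \<and>
     (\<forall>\<gamma> i. geodesic_in Y E \<gamma> \<and> Suc i < length \<gamma> \<and> essential Y E (\<gamma> ! i) (\<gamma> ! Suc i) \<and>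
        real k * M' \<le> real (min (\<delta> (hd \<gamma>) (\<gamma> ! i)) (\<delta> (hd \<gamma>) (\<gamma> ! Suc i))) \<and>
        real k * M' \<le> real (min (\<delta> (last \<gamma>) (\<gamma> ! i)) (\<delta> (last \<gamma>) (\<gamma> ! Suc i))) \<longrightarrow>
        (\<forall>s \<in> {int k, - int k}. \<exists>j. Suc j < length \<gamma> \<and>
           (\<gamma> ! j, \<gamma> ! Suc j) \<in> dual_edges Y E (T s (\<gamma> ! i)) (T s (\<gamma> ! Suc i))))"
proof -
  obtain C where C: "0 \<le> C"
    and splits: "\<And>a b. a \<in> Y \<Longrightarrow> b \<in> Y \<Longrightarrow> E a b \<Longrightarrow> essential Y E a b \<Longrightarrow> \<exists>\<sigma> j. proj_splits C \<sigma> j a b"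
    using uniform_proj_splits by blast
  define N where "N = 2 * int orbit_reach + int orbit_step * (2 * C + jump + \<rho>0 + 1)"
  show ?thesis
  proof (rule exI[of _ "of_int N"], rule exI[of _ "of_int (N + 1)"], intro allI impI conjI ballI; elim conjE)
    fix N' :: real and k a b s x y
    assume N': "of_int N \<le> N'" and k: "0 < k" and ab: "a \<in> Y" "b \<in> Y" "E a b" "essential Y E a b"
      and s: "s \<in> {int k, - int k}"
      and xy: "x \<in> halfspace Y E a b \<inter> T s ` halfspace Y E b a" "y \<in> halfspace Y E a b \<inter> T s ` halfspace Y E b a"
    obtain \<sigma> j where "proj_splits C \<sigma> j a b" using splits[OF ab] by blast
    moreover have "\<bar>s\<bar> = int k" using s by auto
    ultimately have "int (\<delta> x y) \<le> int k * N"
      unfolding N_def using halfspace_translate_gdist_linear[OF C _ k _ xy] by blast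
    then show "real (\<delta> x y) \<le> real k * N'" using N' by (rule real_bound_of_int_bound)
  next
    fix M' :: real and k \<gamma> i s
    assume M': "of_int (N + 1) \<le> M'" and k: "0 < k" and s: "s \<in> {int k, - int k}"
      and geo: "geodesic_in Y E \<gamma>" and i: "Suc i < length \<gamma>" and ess: "essential Y E (\<gamma> ! i) (\<gamma> ! Suc i)"
      and far: "real k * M' \<le> real (min (\<delta> (hd \<gamma>) (\<gamma> ! i)) (\<delta> (hd \<gamma>) (\<gamma> ! Suc i)))"
        "real k * M' \<le> real (min (\<delta> (last \<gamma>) (\<gamma> ! i)) (\<delta> (last \<gamma>) (\<gamma> ! Suc i)))"
    obtain \<sigma> j where "proj_splits C \<sigma> j (\<gamma> ! i) (\<gamma> ! Suc i)"
      using splits geodesic_in_adj[OF geo i] ess by blast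
    moreover have "\<bar>s\<bar> = int k" using s by auto
    moreover have "real (min (\<delta> (hd \<gamma>) (\<gamma> ! i)) (\<delta> (hd \<gamma>) (\<gamma> ! Suc i))) \<le> real (\<delta> (hd \<gamma>) (\<gamma> ! i))"
      "real (min (\<delta> (last \<gamma>) (\<gamma> ! i)) (\<delta> (last \<gamma>) (\<gamma> ! Suc i))) \<le> real (\<delta> (last \<gamma>) (\<gamma> ! Suc i))"
      by simp_all
    then have "int k * (N + 1) \<le> int (\<delta> (hd \<gamma>) (\<gamma> ! i))" "int k * (N + 1) \<le> int (\<delta> (last \<gamma>) (\<gamma> ! Suc i))"
      using far int_bound_of_real_bound[OF _ M'] by (meson order_trans)+
    ultimately show "\<exists>j. Suc j < length \<gamma> \<and> (\<gamma> ! j, \<gamma> ! Suc j) \<in> dual_edges Y E (T s (\<gamma> ! i)) (T s (\<gamma> ! Suc i))"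
      using geodesic_crosses_translate_linear[OF C _ geo i k] unfolding N_def by blast
  qed
qed

end

theorem lemma5p7:
  fixes E :: "'v \<Rightarrow> 'v \<Rightarrow> bool" and G :: "('v \<Rightarrow> 'v) set"
    and Y :: "'v set" and \<phi> :: "'v \<Rightarrow> 'v"
  assumes "median_graph E" and "locally_finite E" and "free_cocompact_group E G"
    and "quasiline E G Y \<phi>"
  shows "\<exists>N M :: real. \<forall>N' \<ge> N. \<forall>M' \<ge> M. \<forall>k::nat. 0 < k \<longrightarrow>
     (\<forall>a b. a \<in> Y \<and> b \<in> Y \<and> E a b \<and> essential Y E a b \<longrightarrow>
        (\<forall>s \<in> {int k, - int k}.
           \<forall>x \<in> halfspace Y E a b \<inter> fpow \<phi> s ` halfspace Y E b a.
           \<forall>y \<in> halfspace Y E a b \<inter> fpow \<phi> s ` halfspace Y E b a.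
             real (gdist Y E x y) \<le> real k * N')) \<and>
     (\<forall>\<gamma> i. geodesic_in Y E \<gamma> \<and> Suc i < length \<gamma> \<and>
        essential Y E (\<gamma> ! i) (\<gamma> ! Suc i) \<and>
        real k * M' \<le> real (min (gdist Y E (hd \<gamma>) (\<gamma> ! i)) (gdist Y E (hd \<gamma>) (\<gamma> ! Suc i))) \<and>
        real k * M' \<le> real (min (gdist Y E (last \<gamma>) (\<gamma> ! i)) (gdist Y E (last \<gamma>) (\<gamma> ! Suc i))) \<longrightarrow>
        (\<forall>s \<in> {int k, - int k}. \<exists>j. Suc j < length \<gamma> \<and>
           (\<gamma> ! j, \<gamma> ! Suc j) \<in> dual_edges Y E (fpow \<phi> s (\<gamma> ! i)) (fpow \<phi> s (\<gamma> ! Suc i))))"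
proof -
  interpret quasiline_space E G Y \<phi> using assms by (rule quasiline_space.intro)
  show ?thesis
  proof (cases "\<forall>R. \<exists>x\<in>Y. \<exists>y\<in>Y. R \<le> gdist Y E x y")
    case False
    then have "\<not> essential Y E a b" if "a \<in> Y" "b \<in> Y" "E a b" for a b
      using essential_unbounded that by blast
    then show ?thesis using geodesic_in_adj by blast
  next
    case True
    interpret unbounded_quasiline E G Y \<phi> by unfold_locales (use True in blast)
    show ?thesis by (rule translation_constants)
  qed
qed

end
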